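(* Let $A$ and $B$ be algebras such that the right $A$-module $A_A$ is idempotent and non-degenerate, let $s\colon B\to M(A)$ be a homomorphism and $t\colon B\to M(A)$ an anti-homomorphism with commuting images such that the $B$-modules ${}_BA$ and $A^B$ are faithful and idempotent. Assume moreover one of the following: (1) the right module $A_A$ has local units in $A$; (2) there exists a left separability multiplier $E\in M(B\otimes B^{\mathrm{op}})$; (3) the algebra $B$ is firm and the $B$-modules ${}_BA$ and $A^B$ are locally projective. Then ${}_BA\otimes A^B$ is non-degenerate as a right module over $A\otimes1$ and over $1\otimes A$.
   Context: All algebras are associative complex algebras, not necessarily unital. For an algebra $A$ with $A_A$ non-degenerate, $L(A)$ is the algebra of right $A$-module endomorphisms of $A$, containing $A$ via left multiplication, and $M(A)=\{T\in L(A): aT\in A\ \forall a\in A\}$. ${}_BA$ is $A$ as a left $B$-module via $x\cdot a=s(x)a$; $A^B$ is $A$ as a right $B$-module via $a\cdot x=t(x)a$; faithful and idempotent means $s$, $t$ injective and $s(B)A=A=t(B)A$. ${}_BA\otimes A^B$ is the quotient of $A\otimes A$ by the span of $s(x)a\otimes b-a\otimes t(x)b$; it is a right module over $A\otimes1$ and $1\otimes A$ by right multiplication in the respective factor; non-degenerate means: if $w(c\otimes1)=0$ for all $c\in A$ then $w=0$ (and likewise for $1\otimes c$). A module $M_D$ is non-degenerate if $mD=0$ implies $m=0$; $A_A$ has local units if for every finite $F\subseteq A$ there is $e\in A$ with $ae=a$ for all $a\in F$. Under the hypotheses $B$ is a non-degenerate algebra, so $M(B\otimes B^{\mathrm{op}})$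 makes sense. A left separability multiplier is $E\in M(B\otimes B^{\mathrm{op}})$ such that for all $x\in B$, $E(x\otimes1)=E(1\otimes x^{\mathrm{op}})\in B\otimes B^{\mathrm{op}}$ and the linear map $y\otimes z^{\mathrm{op}}\mapsto zy$ sends this element to $x$. An algebra $D$ is firm if multiplication $D\otimes_DD\to D$ is an isomorphism. A $D$-module $M$ is locally projective if for every finite $F\subseteq M$ there are finitely many module maps $\upsilon_i\colon M\to D$ and $m_i\colon D\to M$ with $\sum_im_i(\upsilon_i(m))=m$ for all $m\in F$. *)

theory Defs
  imports Complex_Main
begin

text \<open>Complex algebras (associative, not necessarily unital) are modelled as a type of
  class ring together with a scalar multiplication by complex numbers.\<close>

definition calg :: "(complex \<Rightarrow> 'a::ring \<Rightarrow> 'a) \<Rightarrow> bool" where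
  "calg sc \<longleftrightarrow>
     (\<forall>c x y. sc c (x + y) = sc c x + sc c y) \<and>
     (\<forall>c d x. sc (c + d) x = sc c x + sc d x) \<and>
     (\<forall>c d x. sc c (sc d x) = sc (c * d) x) \<and>
     (\<forall>x. sc 1 x = x) \<and>
     (\<forall>c x y. sc c (x * y) = sc c x * y \<and> sc c (x * y) = x * sc c y)"

definition clin :: "(complex \<Rightarrow> 'a::ab_group_add \<Rightarrow> 'a) \<Rightarrow> (complex \<Rightarrow> 'b::ab_group_add \<Rightarrow> 'b)
                    \<Rightarrow> ('a \<Rightarrow> 'b) \<Rightarrow> bool" where
  "clin sc1 sc2 f \<longleftrightarrow> (\<forall>u v. f (u + v) = f u + f v) \<and> (\<forall>c u. f (sc1 c u) = sc2 c (f u))"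

definition cspan :: "(complex \<Rightarrow> 'a::ab_group_add \<Rightarrow> 'a) \<Rightarrow> 'a set \<Rightarrow> 'a set" where
  "cspan sc S = {x. \<exists>(n::nat) c v. (\<forall>i<n. v i \<in> S) \<and> x = (\<Sum>i<n. sc (c i) (v i))}"

text \<open>The multiplier algebra M(A): right A-module endomorphisms T of A with aT in A.\<close>
definition in_MA :: "(complex \<Rightarrow> 'a::ring \<Rightarrow> 'a) \<Rightarrow> ('a \<Rightarrow> 'a) \<Rightarrow> bool" where
  "in_MA sc T \<longleftrightarrow> clin sc sc T \<and> (\<forall>a b. T (a * b) = T a * b) \<and>
     (\<forall>a. \<exists>c. \<forall>b. a * T b = c * b)"

text \<open>Free complex vector space on a set X: finitely supported functions X \<Rightarrow> complex.\<close>
definition fsupp :: "('x \<Rightarrow> complex) \<Rightarrow> bool" where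
  "fsupp f \<longleftrightarrow> finite {p. f p \<noteq> 0}"

definition delta :: "'x \<Rightarrow> 'x \<Rightarrow> complex" where
  "delta p = (\<lambda>q. if q = p then 1 else 0)"

definition fspan :: "('x \<Rightarrow> complex) set \<Rightarrow> ('x \<Rightarrow> complex) set" where
  "fspan R = {g. \<exists>(n::nat) c r. (\<forall>i<n. r i \<in> R) \<and> g = (\<lambda>q. \<Sum>i<n. c i * r i q)}"

definition fmap :: "('x \<Rightarrow> 'y) \<Rightarrow> ('x \<Rightarrow> complex) \<Rightarrow> ('y \<Rightarrow> complex)" where
  "fmap g f = (\<lambda>q. \<Sum>p\<in>{p. f p \<noteq> 0}. if g p = q then f p else 0)"

definition fsum :: "(complex \<Rightarrow> 'a::comm_monoid_add \<Rightarrow> 'a) \<Rightarrow> ('x \<Rightarrow> complex) \<Rightarrow> ('x \<Rightarrow> 'a) \<Rightarrow> 'a" where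
  "fsum sc f h = (\<Sum>p\<in>{p. f p \<noteq> 0}. sc (f p) (h p))"

text \<open>Relations generating the kernel of Free(A x B) \<rightarrow> A \<otimes> B (tensor over complex numbers).\<close>
definition bil_rel :: "(complex \<Rightarrow> 'a::plus \<Rightarrow> 'a) \<Rightarrow> (complex \<Rightarrow> 'b::plus \<Rightarrow> 'b)
                       \<Rightarrow> ('a \<times> 'b \<Rightarrow> complex) set" where
  "bil_rel scA scB =
     {\<lambda>q. delta (a + a', b) q - delta (a, b) q - delta (a', b) q | a a' b. True} \<union>
     {\<lambda>q. delta (a, b + b') q - delta (a, b) q - delta (a, b') q | a b b'. True} \<union>
     {\<lambda>q. delta (scA c a, b) q - c * delta (a, b) q | c a b. True} \<union>
     {\<lambda>q. delta (a, scB c b) q - c * delta (a, b) q | c a b. True}"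

text \<open>Kernel of Free(A x A) \<rightarrow> _B A \<otimes> A^B.\<close>
definition balA_ker :: "(complex \<Rightarrow> 'a::ring \<Rightarrow> 'a) \<Rightarrow> ('b \<Rightarrow> 'a \<Rightarrow> 'a) \<Rightarrow> ('b \<Rightarrow> 'a \<Rightarrow> 'a)
                        \<Rightarrow> ('a \<times> 'a \<Rightarrow> complex) set" where
  "balA_ker scA s t = fspan (bil_rel scA scA \<union>
      {\<lambda>q. delta (s x a, b) q - delta (a, t x b) q | x a b. True})"

text \<open>B \<otimes> B^op, represented by Free(B x B) modulo bil_rel; equality of classes.\<close>
definition teq :: "(complex \<Rightarrow> 'b::ring \<Rightarrow> 'b) \<Rightarrow> ('b \<times> 'b \<Rightarrow> complex) \<Rightarrow> ('b \<times> 'b \<Rightarrow> complex) \<Rightarrow> bool" where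
  "teq scB f g \<longleftrightarrow> (\<lambda>q. f q - g q) \<in> fspan (bil_rel scB scB)"

text \<open>Multiplication of B \<otimes> B^op on representatives: (y \<otimes> z)(y' \<otimes> z') = yy' \<otimes> z'z.\<close>
definition bop_mul :: "('b::ring \<times> 'b \<Rightarrow> complex) \<Rightarrow> ('b \<times> 'b \<Rightarrow> complex) \<Rightarrow> ('b \<times> 'b \<Rightarrow> complex)" where
  "bop_mul f g = (\<lambda>q. \<Sum>p\<in>{p. f p \<noteq> 0}. \<Sum>p'\<in>{p. g p \<noteq> 0}.
       if (fst p * fst p', snd p' * snd p) = q then f p * g p' else 0)"

text \<open>Elements of M(B \<otimes> B^op): right module endomorphisms E (acting on representatives,
  compatible with the quotient) such that dE lies in B \<otimes> B^op for all d.\<close>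
definition in_M_BBop :: "(complex \<Rightarrow> 'b::ring \<Rightarrow> 'b) \<Rightarrow> (('b \<times> 'b \<Rightarrow> complex) \<Rightarrow> ('b \<times> 'b \<Rightarrow> complex)) \<Rightarrow> bool" where
  "in_M_BBop scB E \<longleftrightarrow>
     (\<forall>f. fsupp f \<longrightarrow> fsupp (E f)) \<and>
     (\<forall>f g. fsupp f \<and> fsupp g \<and> teq scB f g \<longrightarrow> teq scB (E f) (E g)) \<and>
     (\<forall>f g. fsupp f \<and> fsupp g \<longrightarrow> teq scB (E (\<lambda>q. f q + g q)) (\<lambda>q. E f q + E g q)) \<and>
     (\<forall>f c. fsupp f \<longrightarrow> teq scB (E (\<lambda>q. c * f q)) (\<lambda>q. c * E f q)) \<and>
     (\<forall>f g. fsupp f \<and> fsupp g \<longrightarrow> teq scB (E (bop_mul f g)) (bop_mul (E f) g)) \<and>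
     (\<forall>d. fsupp d \<longrightarrow> (\<exists>e. fsupp e \<and> (\<forall>f. fsupp f \<longrightarrow> teq scB (bop_mul d (E f)) (bop_mul e f))))"

text \<open>Left separability multiplier: E(x \<otimes> 1) = E(1 \<otimes> x^op) = d \<in> B \<otimes> B^op with m^op(d) = x.
  Here x \<otimes> 1 acts by y \<otimes> z \<mapsto> xy \<otimes> z and 1 \<otimes> x^op by y \<otimes> z \<mapsto> y \<otimes> zx.\<close>
definition left_sep_mult :: "(complex \<Rightarrow> 'b::ring \<Rightarrow> 'b) \<Rightarrow> (('b \<times> 'b \<Rightarrow> complex) \<Rightarrow> ('b \<times> 'b \<Rightarrow> complex)) \<Rightarrow> bool" where
  "left_sep_mult scB E \<longleftrightarrow> in_M_BBop scB E \<and>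
     (\<forall>x. \<exists>d. fsupp d \<and>
        (\<forall>f. fsupp f \<longrightarrow>
            teq scB (E (fmap (\<lambda>p. (x * fst p, snd p)) f)) (bop_mul d f) \<and>
            teq scB (E (fmap (\<lambda>p. (fst p, snd p * x)) f)) (bop_mul d f)) \<and>
        fsum scB d (\<lambda>p. snd p * fst p) = x)"

text \<open>B is firm: multiplication B \<otimes>_B B \<rightarrow> B is a linear isomorphism.\<close>
definition firm :: "(complex \<Rightarrow> 'b::ring \<Rightarrow> 'b) \<Rightarrow> bool" where
  "firm scB \<longleftrightarrow>
     (\<forall>b. \<exists>f. fsupp f \<and> fsum scB f (\<lambda>p. fst p * snd p) = b) \<and>
     (\<forall>f g. fsupp f \<and> fsupp g \<and> fsum scB f (\<lambda>p. fst p * snd p) = fsum scB g (\<lambda>p. fst p * snd p)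
        \<longrightarrow> (\<lambda>q. f q - g q) \<in> fspan (bil_rel scB scB \<union>
              {\<lambda>q. delta (x * y, z) q - delta (x, y * z) q | x y z. True}))"

text \<open>_B A (action x.a = s(x)a) is locally projective.\<close>
definition loc_proj_left :: "(complex \<Rightarrow> 'a::ring \<Rightarrow> 'a) \<Rightarrow> (complex \<Rightarrow> 'b::ring \<Rightarrow> 'b)
                               \<Rightarrow> ('b \<Rightarrow> 'a \<Rightarrow> 'a) \<Rightarrow> bool" where
  "loc_proj_left scA scB s \<longleftrightarrow> (\<forall>F. finite F \<longrightarrow>
     (\<exists>(n::nat) u m. (\<forall>i<n. clin scA scB (u i) \<and> (\<forall>x a. u i (s x a) = x * u i a) \<and>
                     clin scB scA (m i) \<and> (\<forall>x y. m i (x * y) = s x (m i y))) \<and>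
               (\<forall>a\<in>F. (\<Sum>i<n. m i (u i a)) = a)))"

text \<open>A^B (action a.x = t(x)a) is locally projective.\<close>
definition loc_proj_right :: "(complex \<Rightarrow> 'a::ring \<Rightarrow> 'a) \<Rightarrow> (complex \<Rightarrow> 'b::ring \<Rightarrow> 'b)
                               \<Rightarrow> ('b \<Rightarrow> 'a \<Rightarrow> 'a) \<Rightarrow> bool" where
  "loc_proj_right scA scB t \<longleftrightarrow> (\<forall>F. finite F \<longrightarrow>
     (\<exists>(n::nat) u m. (\<forall>i<n. clin scA scB (u i) \<and> (\<forall>x a. u i (t x a) = u i a * x) \<and>
                     clin scB scA (m i) \<and> (\<forall>x y. m i (y * x) = t x (m i y))) \<and>
               (\<forall>a\<in>F. (\<Sum>i<n. m i (u i a)) = a)))"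

end

theory Submission
  imports Defs "HOL-Library.Function_Algebras"
begin

(*
  An element w of the free vector space on A \<times> A lies in the kernel of the quotient map onto
  _BA \<otimes> A^B exactly when every balanced bilinear form, \<beta> (s x a) b = \<beta> a (t x b), vanishes
  on w, since a vector outside a subspace is separated from it by a linear functional. Thus
  non-degeneracy over A \<otimes> 1 means: if \<Sum> w\<^sub>i \<beta> (a\<^sub>i c) b\<^sub>i = 0 for every c and every
  balanced \<beta>, then \<Sum> w\<^sub>i \<beta> a\<^sub>i b\<^sub>i = 0; likewise over 1 \<otimes> A.

  With local units this is immediate. A left separability multiplier E turns a bilinear form
  \<gamma> into a balanced one by twisting it with E (y \<otimes> 1) = \<Sum> d\<^sub>p y\<^sub>p \<otimes> z\<^sub>p, i.e.
  s y c, b \<mapsto> \<Sum> d\<^sub>p \<gamma> (s y\<^sub>p c) (t z\<^sub>p b); a balanced \<beta> is its own twist, because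
  \<Sum> d\<^sub>p z\<^sub>p y\<^sub>p = y. This reduces the claim to the non-degeneracy of the ordinary tensor
  product A \<otimes> A, which follows from that of A_A by expanding in finitely many coordinates.
  If B is firm and _BA, A^B are locally projective, dual bases express \<beta> through functionals
  on B \<cong> B \<otimes>\<^sub>B B, and the remaining coefficients \<Sum> w\<^sub>i s (u b\<^sub>i) a\<^sub>i are annihilated
  by right multiplication, hence vanish.
*)

definition feval :: "('x \<Rightarrow> complex) \<Rightarrow> ('x \<Rightarrow> complex) \<Rightarrow> complex" where
  "feval \<phi> f = (\<Sum>p\<in>{p. f p \<noteq> 0}. f p * \<phi> p)"

lemma supp_fmap: "{q. fmap g f q \<noteq> 0} \<subseteq> g ` {p. f p \<noteq> 0}"
proof
  fix q assume "q \<in> {q. fmap g f q \<noteq> 0}"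
  then obtain p where "f p \<noteq> 0" "(if g p = q then f p else 0) \<noteq> 0"
    unfolding fmap_def using sum.not_neutral_contains_not_neutral by force
  then show "q \<in> g ` {p. f p \<noteq> 0}" by (auto split: if_splits)
qed

lemma fsupp_fmap: "fsupp f \<Longrightarrow> fsupp (fmap g f)"
  unfolding fsupp_def by (rule finite_subset[OF supp_fmap]) simp

lemma supp_delta: "{q. delta p q \<noteq> 0} = {p}"
  by (auto simp: delta_def)

lemma fsupp_delta: "fsupp (delta p)"
  by (simp add: fsupp_def supp_delta)

lemma fmap_delta: "fmap g (delta p) = delta (g p)"
  unfolding fmap_def supp_delta by (auto simp: delta_def fun_eq_iff)

lemma supp_lincomb:
  fixes f :: "'k \<Rightarrow> 'x \<Rightarrow> complex"
  shows "{q. (\<Sum>k\<in>Ks. \<mu> k * f k q) \<noteq> 0} \<subseteq> (\<Union>k\<in>Ks. {q. f k q \<noteq> 0})"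
proof
  fix q assume "q \<in> {q. (\<Sum>k\<in>Ks. \<mu> k * f k q) \<noteq> 0}"
  then obtain k where "k \<in> Ks" "\<mu> k * f k q \<noteq> 0"
    using sum.not_neutral_contains_not_neutral by blast
  then show "q \<in> (\<Union>k\<in>Ks. {q. f k q \<noteq> 0})" by auto
qed

lemma fsupp_lincomb:
  assumes "finite Ks" "\<forall>k\<in>Ks. fsupp (f k)"
  shows "fsupp (\<lambda>q. \<Sum>k\<in>Ks. \<mu> k * f k q)"
  unfolding fsupp_def by (rule finite_subset[OF supp_lincomb]) (use assms in \<open>auto simp: fsupp_def\<close>)

lemma sum_fun_apply: "sum f S x = (\<Sum>i\<in>S. f i x)" for f :: "'i \<Rightarrow> 'x \<Rightarrow> 'c::comm_monoid_add"
  by (induction S rule: infinite_finite_induct) auto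

lemma fsupp_expand:
  assumes "fsupp h"
  shows "h = (\<Sum>p\<in>{p. h p \<noteq> 0}. (\<lambda>q. h p * delta p q))"
proof
  fix q
  have "(\<Sum>p\<in>{p. h p \<noteq> 0}. (\<lambda>q. h p * delta p q)) q = (\<Sum>p\<in>{p. h p \<noteq> 0}. h p * delta p q)"
    by (rule sum_fun_apply)
  also have "\<dots> = (\<Sum>p\<in>{p. h p \<noteq> 0}. if p = q then h q else 0)"
    by (rule sum.cong) (auto simp: delta_def)
  also have "\<dots> = h q" using assms by (simp add: fsupp_def)
  finally show "h q = (\<Sum>p\<in>{p. h p \<noteq> 0}. (\<lambda>q. h p * delta p q)) q" by simp
qed

lemma bop_mul_delta: "bop_mul D (delta q) = fmap (\<lambda>p. (fst p * fst q, snd q * snd p)) D"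
proof
  fix q'
  show "bop_mul D (delta q) q' = fmap (\<lambda>p. (fst p * fst q, snd q * snd p)) D q'"
    unfolding bop_mul_def fmap_def supp_delta by (simp add: delta_def cong: if_cong)
qed

lemma fsupp_bop_mul_delta: "fsupp D \<Longrightarrow> fsupp (bop_mul D (delta q))"
  unfolding bop_mul_delta by (rule fsupp_fmap)

lemma sum_Sigma_Sigma:
  assumes "finite I" "\<And>i. finite (K i)" "\<And>i k. finite (Q i k)"
  shows "(\<Sum>(i, k, q)\<in>(SIGMA i:I. SIGMA k:K i. Q i k). f i k q) = (\<Sum>i\<in>I. \<Sum>k\<in>K i. \<Sum>q\<in>Q i k. f i k q)"
proof -
  have "(\<Sum>i\<in>I. \<Sum>k\<in>K i. \<Sum>q\<in>Q i k. f i k q) = (\<Sum>i\<in>I. \<Sum>(k, q)\<in>(SIGMA k:K i. Q i k). f i k q)"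
    by (rule sum.cong[OF refl]) (simp add: sum.Sigma assms)
  also have "\<dots> = (\<Sum>(i, k, q)\<in>(SIGMA i:I. SIGMA k:K i. Q i k). f i k q)"
    by (simp add: sum.Sigma assms finite_SigmaI split_beta)
  finally show ?thesis by simp
qed

section \<open>Complex vector spaces\<close>

locale complex_space = vector_space scale for scale :: "complex \<Rightarrow> 'v::ab_group_add \<Rightarrow> 'v"
begin

lemma fsum_superset:
  assumes "finite T" "{p. f p \<noteq> 0} \<subseteq> T"
  shows "fsum scale f h = (\<Sum>p\<in>T. scale (f p) (h p))"
  unfolding fsum_def using assms by (intro sum.mono_neutral_left) auto

lemma fsum_fmap:
  assumes "fsupp f"
  shows "fsum scale (fmap g f) h = (\<Sum>p\<in>{p. f p \<noteq> 0}. scale (f p) (h (g p)))"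
proof -
  let ?S = "{p. f p \<noteq> 0}"
  have fin: "finite ?S" using assms by (simp add: fsupp_def)
  have "fsum scale (fmap g f) h = (\<Sum>q\<in>g ` ?S. scale (fmap g f q) (h q))"
    by (rule fsum_superset) (use fin supp_fmap[of g f] in auto)
  also have "\<dots> = (\<Sum>q\<in>g ` ?S. \<Sum>p\<in>{p\<in>?S. g p = q}. scale (f p) (h (g p)))"
  proof (rule sum.cong[OF refl])
    fix q
    have "fmap g f q = (\<Sum>p\<in>{p\<in>?S. g p = q}. f p)"
      unfolding fmap_def using sum.inter_filter[OF fin, of f "\<lambda>p. g p = q"] by simp
    then show "scale (fmap g f q) (h q) = (\<Sum>p\<in>{p\<in>?S. g p = q}. scale (f p) (h (g p)))"
      by (simp add: scale_sum_left)
  qed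
  also have "\<dots> = (\<Sum>p\<in>?S. scale (f p) (h (g p)))"
    by (rule sum.image_gen[OF fin, symmetric])
  finally show ?thesis .
qed

lemma fsum_lincomb:
  assumes fin: "finite Ks" and f: "\<forall>k\<in>Ks. fsupp (f k)"
  shows "fsum scale (\<lambda>q. \<Sum>k\<in>Ks. \<mu> k * f k q) h = (\<Sum>k\<in>Ks. scale (\<mu> k) (fsum scale (f k) h))"
proof -
  define T where "T = (\<Union>k\<in>Ks. {q. f k q \<noteq> 0})"
  have finT: "finite T" using fin f by (auto simp: fsupp_def T_def)
  have "fsum scale (\<lambda>q. \<Sum>k\<in>Ks. \<mu> k * f k q) h = (\<Sum>q\<in>T. scale (\<Sum>k\<in>Ks. \<mu> k * f k q) (h q))"
    by (rule fsum_superset[OF finT]) (use supp_lincomb in \<open>simp add: T_def\<close>)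
  also have "\<dots> = (\<Sum>q\<in>T. \<Sum>k\<in>Ks. scale (\<mu> k) (scale (f k q) (h q)))"
    by (simp add: scale_sum_left)
  also have "\<dots> = (\<Sum>k\<in>Ks. \<Sum>q\<in>T. scale (\<mu> k) (scale (f k q) (h q)))"
    by (rule sum.swap)
  also have "\<dots> = (\<Sum>k\<in>Ks. scale (\<mu> k) (fsum scale (f k) h))"
  proof (rule sum.cong[OF refl])
    fix k assume "k \<in> Ks"
    then have "fsum scale (f k) h = (\<Sum>q\<in>T. scale (f k q) (h q))"
      by (intro fsum_superset[OF finT]) (auto simp: T_def)
    then show "(\<Sum>q\<in>T. scale (\<mu> k) (scale (f k q) (h q))) = scale (\<mu> k) (fsum scale (f k) h)"
      by (simp add: scale_sum_right)
  qed
  finally show ?thesis .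
qed

lemma finite_coordinates:
  assumes "finite S"
  shows "\<exists>E g. finite E \<and> (\<forall>e. clin scale (*) (g e)) \<and> (\<forall>b\<in>S. b = (\<Sum>e\<in>E. scale (g e b) e))"
proof -
  define BB where "BB = extend_basis {}"
  have ind: "independent BB" and sp: "span BB = UNIV"
    using independent_extend_basis[OF independent_empty] span_extend_basis[OF independent_empty]
    unfolding BB_def by auto
  define E where "E = (\<Union>b\<in>S. {e. representation BB b e \<noteq> 0})"
  have "finite E" unfolding E_def using assms finite_representation by auto
  moreover have "clin scale (*) (\<lambda>v. representation BB v e)" for e
    using linear_representation[OF ind sp, of e]
    unfolding Vector_Spaces.linear_iff clin_def by auto
  moreover have "b = (\<Sum>e\<in>E. scale (representation BB b e) e)" if "b \<in> S" for b
  proof -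
    have "b = (\<Sum>e | representation BB b e \<noteq> 0. scale (representation BB b e) e)"
      using sum_nonzero_representation_eq[OF ind] sp by auto
    also have "\<dots> = (\<Sum>e\<in>E. scale (representation BB b e) e)"
      by (rule sum.mono_neutral_left) (use \<open>finite E\<close> that in \<open>auto simp: E_def\<close>)
    finally show ?thesis .
  qed
  ultimately show ?thesis
    by (intro exI[of _ E] exI[of _ "\<lambda>e v. representation BB v e"]) blast
qed

end

lemma complex_space_complex: "complex_space ((*) :: complex \<Rightarrow> complex \<Rightarrow> complex)"
  by unfold_locales (auto simp: algebra_simps)

lemma complex_space_fun: "complex_space (\<lambda>c (f :: 'x \<Rightarrow> complex) q. c * f q)"
  by unfold_locales (auto simp: fun_eq_iff algebra_simps)

lemma complex_space_calg: "calg sc \<Longrightarrow> complex_space sc"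
  unfolding calg_def by unfold_locales auto

lemma clin_zero:
  assumes "complex_space sc1" "complex_space sc2" "clin sc1 sc2 f"
  shows "f 0 = 0"
proof -
  interpret V1: complex_space sc1 by fact
  interpret V2: complex_space sc2 by fact
  have "f (sc1 0 0) = sc2 0 (f 0)" using assms(3) unfolding clin_def by blast
  then show ?thesis by simp
qed

lemma clin_sum:
  assumes "complex_space sc1" "complex_space sc2" "clin sc1 sc2 f"
  shows "f (\<Sum>i\<in>I. sc1 (\<mu> i) (x i)) = (\<Sum>i\<in>I. sc2 (\<mu> i) (f (x i)))"
proof (induction I rule: infinite_finite_induct)
  case (insert i I)
  then show ?case using assms(3) unfolding clin_def by simp
qed (simp_all add: clin_zero[OF assms])

lemma feval_fsum: "feval \<phi> f = fsum (*) f \<phi>"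
  unfolding feval_def fsum_def ..

lemma feval_superset: "finite T \<Longrightarrow> {p. f p \<noteq> 0} \<subseteq> T \<Longrightarrow> feval \<phi> f = (\<Sum>p\<in>T. f p * \<phi> p)"
  unfolding feval_fsum by (rule complex_space.fsum_superset[OF complex_space_complex])

lemma feval_fmap: "fsupp f \<Longrightarrow> feval \<phi> (fmap g f) = (\<Sum>p\<in>{p. f p \<noteq> 0}. f p * \<phi> (g p))"
  unfolding feval_fsum by (rule complex_space.fsum_fmap[OF complex_space_complex])

lemma feval_lincomb:
  "finite Ks \<Longrightarrow> \<forall>k\<in>Ks. fsupp (f k) \<Longrightarrow>
    feval \<phi> (\<lambda>q. \<Sum>k\<in>Ks. \<mu> k * f k q) = (\<Sum>k\<in>Ks. \<mu> k * feval \<phi> (f k))"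
  unfolding feval_fsum by (rule complex_space.fsum_lincomb[OF complex_space_complex])

lemma feval_diff:
  assumes "fsupp f" "fsupp g"
  shows "feval \<phi> (\<lambda>q. f q - g q) = feval \<phi> f - feval \<phi> g"
  using feval_lincomb[of "{True, False}" "\<lambda>k. if k then f else g" \<phi> "\<lambda>k. if k then 1 else -1"] assms
  by simp

lemma feval_fspan:
  assumes "\<forall>r\<in>R. fsupp r \<and> feval \<phi> r = 0" "g \<in> fspan R"
  shows "feval \<phi> g = 0"
proof -
  obtain n :: nat and c r where "\<forall>i<n. r i \<in> R" "g = (\<lambda>q. \<Sum>i<n. c i * r i q)"
    using assms(2) unfolding fspan_def by blast
  then show ?thesis using assms(1) by (simp add: feval_lincomb)
qed

lemma sum_delta: "finite T \<Longrightarrow> p \<in> T \<Longrightarrow> (\<Sum>q\<in>T. delta p q * \<phi> q) = \<phi> p"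
proof -
  assume "finite T" "p \<in> T"
  have "(\<Sum>q\<in>T. delta p q * \<phi> q) = (\<Sum>q\<in>T. if q = p then \<phi> q else 0)"
    by (rule sum.cong) (simp_all add: delta_def)
  then show ?thesis using \<open>finite T\<close> \<open>p \<in> T\<close> by simp
qed

lemma fsupp_delta_diff3: "fsupp (\<lambda>q. delta x q - delta y q - delta z q)"
  unfolding fsupp_def by (rule finite_subset[of _ "{x,y,z}"]) (auto simp: delta_def)

lemma fsupp_delta_diff: "fsupp (\<lambda>q. delta x q - c * delta y q)"
  unfolding fsupp_def by (rule finite_subset[of _ "{x,y}"]) (auto simp: delta_def)

lemma feval_delta_diff3: "feval \<phi> (\<lambda>q. delta x q - delta y q - delta z q) = \<phi> x - \<phi> y - \<phi> z"
proof -
  have "feval \<phi> (\<lambda>q. delta x q - delta y q - delta z q) =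
        (\<Sum>q\<in>{x,y,z}. (delta x q - delta y q - delta z q) * \<phi> q)"
    by (rule feval_superset) (auto simp: delta_def)
  also have "\<dots> = \<phi> x - \<phi> y - \<phi> z"
    by (simp add: left_diff_distrib sum_subtractf sum_delta)
  finally show ?thesis .
qed

lemma feval_delta_diff: "feval \<phi> (\<lambda>q. delta x q - c * delta y q) = \<phi> x - c * \<phi> y"
proof -
  have "feval \<phi> (\<lambda>q. delta x q - c * delta y q) = (\<Sum>q\<in>{x,y}. (delta x q - c * delta y q) * \<phi> q)"
    by (rule feval_superset) (auto simp: delta_def)
  also have "\<dots> = (\<Sum>q\<in>{x,y}. delta x q * \<phi> q) - c * (\<Sum>q\<in>{x,y}. delta y q * \<phi> q)"
    by (simp only: left_diff_distrib sum_subtractf mult.assoc sum_distrib_left)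
  also have "\<dots> = \<phi> x - c * \<phi> y" by (simp add: sum_delta)
  finally show ?thesis .
qed

lemma fsupp_delta_diff1: "fsupp (\<lambda>q. delta x q - delta y q)"
  unfolding fsupp_def by (rule finite_subset[of _ "{x,y}"]) (auto simp: delta_def)

lemma feval_delta_diff1: "feval \<phi> (\<lambda>q. delta x q - delta y q) = \<phi> x - \<phi> y"
  using feval_delta_diff[of \<phi> x 1 y] by simp

lemma span_subset_fspan: "module.span (\<lambda>c (f :: 'x \<Rightarrow> complex) q. c * f q) R \<subseteq> fspan R"
proof -
  interpret V: complex_space "\<lambda>c (f :: 'x \<Rightarrow> complex) q. c * f q"
    by (rule complex_space_fun)
  show ?thesis
  proof
    fix x assume "x \<in> V.span R"
    then show "x \<in> fspan R"
    proof (induction rule: V.span_induct_alt)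
      case base
      show ?case unfolding fspan_def
        by (rule CollectI, rule exI[of _ "0::nat"]) (auto simp: fun_eq_iff)
    next
      case (step c x y)
      from step.IH obtain n :: nat and cc rr where rr: "\<forall>i<n. rr i \<in> R"
        and y: "y = (\<lambda>q. \<Sum>i<n. cc i * rr i q)"
        unfolding fspan_def by blast
      have "(\<lambda>q. c * x q) + y = (\<lambda>q. \<Sum>i<Suc n. (cc(n := c)) i * (rr(n := x)) i q)"
        unfolding y by (auto simp: fun_eq_iff)
      moreover have "\<forall>i<Suc n. (rr(n := x)) i \<in> R" using rr step.hyps by auto
      ultimately show ?case unfolding fspan_def by blast
    qed
  qed
qed

lemma feval_linear:
  assumes g: "Vector_Spaces.linear (\<lambda>c (f :: 'x \<Rightarrow> complex) q. c * f q) (*) g" and h: "fsupp h"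
  shows "feval (\<lambda>p. g (delta p)) h = g h"
proof -
  interpret P: vector_space_pair "\<lambda>c (f :: 'x \<Rightarrow> complex) q. c * f q" "(*) :: complex \<Rightarrow> _"
    using complex_space_fun complex_space_complex unfolding complex_space_def
    by (rule vector_space_pair.intro)
  have "g h = g (\<Sum>p\<in>{p. h p \<noteq> 0}. (\<lambda>q. h p * delta p q))"
    using fsupp_expand[OF h] by simp
  also have "\<dots> = (\<Sum>p\<in>{p. h p \<noteq> 0}. g (\<lambda>q. h p * delta p q))"
    by (rule P.linear_sum[OF g])
  also have "\<dots> = (\<Sum>p\<in>{p. h p \<noteq> 0}. h p * g (delta p))"
    by (rule sum.cong[OF refl]) (use P.linear_scale[OF g] in auto)
  finally show ?thesis unfolding feval_def by simp
qed

lemma fspan_separating_functional: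
  fixes R :: "('x \<Rightarrow> complex) set"
  assumes R: "\<forall>r\<in>R. fsupp r" and w: "fsupp w" and nw: "w \<notin> fspan R"
  shows "\<exists>\<phi>. (\<forall>r\<in>R. feval \<phi> r = 0) \<and> feval \<phi> w \<noteq> 0"
proof -
  interpret V: complex_space "\<lambda>c (f :: 'x \<Rightarrow> complex) q. c * f q"
    by (rule complex_space_fun)
  interpret P: vector_space_pair "\<lambda>c (f :: 'x \<Rightarrow> complex) q. c * f q" "(*) :: complex \<Rightarrow> _"
    using complex_space_fun complex_space_complex unfolding complex_space_def
    by (rule vector_space_pair.intro)
  obtain BK where BK: "BK \<subseteq> V.span R" "V.independent BK" "V.span R \<subseteq> V.span BK"
    using V.maximal_independent_subset by blast
  have "V.span BK \<subseteq> V.span R" using BK(1) V.span_minimal V.subspace_span by blast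
  then have "w \<notin> V.span BK" using span_subset_fspan nw by auto
  then have "V.independent (insert w BK)" using V.independent_insertI BK(2) by auto
  then obtain g where g: "Vector_Spaces.linear (\<lambda>c (f :: 'x \<Rightarrow> complex) q. c * f q) (*) g"
    "\<forall>x\<in>insert w BK. g x = (if x = w then 1 else 0)"
    using P.linear_independent_extend[where f="\<lambda>x. if x = w then 1 else 0"] by blast
  have "g x = 0" if "x \<in> V.span BK" for x
    using P.linear_eq_0_on_span[OF g(1) _ that] g(2) \<open>w \<notin> V.span BK\<close> V.span_base by fastforce
  then have "g r = 0" if "r \<in> R" for r
    using BK(3) V.span_base that by blast
  then show ?thesis
    using feval_linear[OF g(1)] R w g(2) by (intro exI[of _ "\<lambda>p. g (delta p)"]) auto
qed

section \<open>Balanced bilinear forms\<close>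

locale balanced_tensor_setting =
  fixes scA :: "complex \<Rightarrow> 'a::ring \<Rightarrow> 'a"
    and scB :: "complex \<Rightarrow> 'b::ring \<Rightarrow> 'b"
    and s t :: "'b \<Rightarrow> 'a \<Rightarrow> 'a"
  assumes algA: "calg scA" and algB: "calg scB"
    and A_nondeg: "\<forall>a::'a. (\<forall>b. a * b = 0) \<longrightarrow> a = 0"
    and s_M: "\<forall>x. in_MA scA (s x)"
    and s_hom: "\<forall>x y. s (x + y) = (\<lambda>a. s x a + s y a)"
               "\<forall>c x. s (scB c x) = (\<lambda>a. scA c (s x a))"
               "\<forall>x y. s (x * y) = s x \<circ> s y"
    and t_M: "\<forall>x. in_MA scA (t x)"
    and t_antihom: "\<forall>x y. t (x + y) = (\<lambda>a. t x a + t y a)"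
               "\<forall>c x. t (scB c x) = (\<lambda>a. scA c (t x a))"
               "\<forall>x y. t (x * y) = t y \<circ> t x"
    and s_idem: "\<forall>a. a \<in> cspan scA {s x b | x b. True}"
    and t_idem: "\<forall>a. a \<in> cspan scA {t x b | x b. True}"
begin

lemmas spaceA = complex_space_calg[OF algA]
lemmas spaceB = complex_space_calg[OF algB]

lemma scA_mult: "scA c (x * y) = scA c x * y" "scA c (x * y) = x * scA c y"
  using algA unfolding calg_def by blast+

lemma scB_mult: "scB c (x * y) = scB c x * y" "scB c (x * y) = x * scB c y"
  using algB unfolding calg_def by blast+

lemma scA_one: "scA 1 x = x"
  using algA unfolding calg_def by blast

lemma scA_zero_left [simp]: "scA 0 x = 0"
proof -
  interpret complex_space scA by (rule spaceA)
  show ?thesis by simp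
qed

lemma s_clin: "clin scA scA (s x)" and t_clin: "clin scA scA (t x)"
  using s_M t_M unfolding in_MA_def by blast+

lemma s_clin_B: "clin scB scA (\<lambda>x. s x a)"
  using s_hom(1,2) unfolding clin_def by metis

lemma t_clin_B: "clin scB scA (\<lambda>x. t x a)"
  using t_antihom(1,2) unfolding clin_def by metis

lemma s_add: "s x (a + b) = s x a + s x b"
  and s_scale: "s x (scA c a) = scA c (s x a)"
  and t_add: "t x (a + b) = t x a + t x b"
  and t_scale: "t x (scA c a) = scA c (t x a)"
  and s_add_B: "s (x + y) a = s x a + s y a"
  and s_scale_B: "s (scB c x) a = scA c (s x a)"
  and t_add_B: "t (x + y) a = t x a + t y a"
  and t_scale_B: "t (scB c x) a = scA c (t x a)"
  using s_clin t_clin s_clin_B t_clin_B unfolding clin_def by auto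

lemma s_mult: "s x (a * b) = s x a * b" and t_mult: "t x (a * b) = t x a * b"
  using s_M t_M unfolding in_MA_def by blast+

lemma s_times: "s (x * y) a = s x (s y a)" and t_times: "t (x * y) a = t y (t x a)"
  using s_hom(3) t_antihom(3) by simp_all

lemma s_sum: "s x (\<Sum>i\<in>I. scA (\<mu> i) (v i)) = (\<Sum>i\<in>I. scA (\<mu> i) (s x (v i)))"
  and s_sum_B: "s (\<Sum>i\<in>I. scB (\<mu> i) (y i)) a = (\<Sum>i\<in>I. scA (\<mu> i) (s (y i) a))"
  using clin_sum[OF spaceA spaceA s_clin] clin_sum[OF spaceB spaceA s_clin_B] by blast+

lemma s_decomposition: obtains n :: nat and \<mu> y b where "a = (\<Sum>k<n. scA (\<mu> k) (s (y k) (b k)))"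
proof -
  obtain n :: nat and c v where v: "\<forall>i<n. v i \<in> {s x b | x b. True}" and a: "a = (\<Sum>i<n. scA (c i) (v i))"
    using s_idem unfolding cspan_def by blast
  have "\<forall>i. \<exists>y b. i < n \<longrightarrow> v i = s y b" using v by blast
  then obtain y b where "\<forall>i<n. v i = s (y i) (b i)" by metis
  then show ?thesis using that a by simp
qed

lemma t_decomposition: obtains n :: nat and \<mu> y b where "a = (\<Sum>k<n. scA (\<mu> k) (t (y k) (b k)))"
proof -
  obtain n :: nat and c v where v: "\<forall>i<n. v i \<in> {t x b | x b. True}" and a: "a = (\<Sum>i<n. scA (c i) (v i))"
    using t_idem unfolding cspan_def by blast
  have "\<forall>i. \<exists>y b. i < n \<longrightarrow> v i = t y b" using v by blast
  then obtain y b where "\<forall>i<n. v i = t (y i) (b i)" by metis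
  then show ?thesis using that a by simp
qed

lemma s_decompositions:
  "\<exists>(N :: 'i \<Rightarrow> nat) \<mu> y c. \<forall>i. a i = (\<Sum>k<N i. scA (\<mu> i k) (s (y i k) (c i k)))"
proof -
  have "\<forall>i. \<exists>(n::nat) \<mu> y c. a i = (\<Sum>k<n. scA (\<mu> k) (s (y k) (c k)))"
  proof
    fix i
    obtain n :: nat and \<mu> y c where "a i = (\<Sum>k<n. scA (\<mu> k) (s (y k) (c k)))"
      by (rule s_decomposition)
    then show "\<exists>(n::nat) \<mu> y c. a i = (\<Sum>k<n. scA (\<mu> k) (s (y k) (c k)))" by blast
  qed
  then show ?thesis by metis
qed

lemma t_decompositions:
  "\<exists>(N :: 'i \<Rightarrow> nat) \<mu> y c. \<forall>i. b i = (\<Sum>k<N i. scA (\<mu> i k) (t (y i k) (c i k)))"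
proof -
  have "\<forall>i. \<exists>(n::nat) \<mu> y c. b i = (\<Sum>k<n. scA (\<mu> k) (t (y k) (c k)))"
  proof
    fix i
    obtain n :: nat and \<mu> y c where "b i = (\<Sum>k<n. scA (\<mu> k) (t (y k) (c k)))"
      by (rule t_decomposition)
    then show "\<exists>(n::nat) \<mu> y c. b i = (\<Sum>k<n. scA (\<mu> k) (t (y k) (c k)))" by blast
  qed
  then show ?thesis by metis
qed

definition s_decomp :: "'a \<Rightarrow> nat \<times> (nat \<Rightarrow> complex) \<times> (nat \<Rightarrow> 'b) \<times> (nat \<Rightarrow> 'a)" where
  "s_decomp a = (SOME (n, \<mu>, y, c). a = (\<Sum>k<n. scA (\<mu> k) (s (y k) (c k))))"

lemma s_decomp: "case s_decomp a of (n, \<mu>, y, c) \<Rightarrow> a = (\<Sum>k<n. scA (\<mu> k) (s (y k) (c k)))"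
proof -
  obtain n :: nat and \<mu> y c where "a = (\<Sum>k<n. scA (\<mu> k) (s (y k) (c k)))"
    by (rule s_decomposition)
  then have "case (n, \<mu>, y, c) of (n, \<mu>, y, c) \<Rightarrow> a = (\<Sum>k<n. scA (\<mu> k) (s (y k) (c k)))"
    by simp
  then have "\<exists>q :: nat \<times> (nat \<Rightarrow> complex) \<times> (nat \<Rightarrow> 'b) \<times> (nat \<Rightarrow> 'a).
      case q of (n, \<mu>, y, c) \<Rightarrow> a = (\<Sum>k<n. scA (\<mu> k) (s (y k) (c k)))"
    by (rule exI)
  then show ?thesis unfolding s_decomp_def by (rule someI_ex)
qed

definition lin :: "('a \<Rightarrow> complex) \<Rightarrow> bool" where
  "lin f \<longleftrightarrow> clin scA (*) f"

definition bil :: "('a \<Rightarrow> 'a \<Rightarrow> complex) \<Rightarrow> bool" where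
  "bil \<beta> \<longleftrightarrow> (\<forall>b. lin (\<lambda>a. \<beta> a b)) \<and> (\<forall>a. lin (\<beta> a))"

definition bal :: "('a \<Rightarrow> 'a \<Rightarrow> complex) \<Rightarrow> bool" where
  "bal \<beta> \<longleftrightarrow> bil \<beta> \<and> (\<forall>x a b. \<beta> (s x a) b = \<beta> a (t x b))"

lemma lin_sum: "lin f \<Longrightarrow> f (\<Sum>i\<in>I. scA (\<mu> i) (x i)) = (\<Sum>i\<in>I. \<mu> i * f (x i))"
  unfolding lin_def by (rule clin_sum[OF spaceA complex_space_complex])

lemma lin_zero: "lin f \<Longrightarrow> f 0 = 0"
  unfolding lin_def by (rule clin_zero[OF spaceA complex_space_complex])

lemma bil_iff: "bil \<beta> \<longleftrightarrow>
    (\<forall>a a' b. \<beta> (a + a') b = \<beta> a b + \<beta> a' b) \<and> (\<forall>a b b'. \<beta> a (b + b') = \<beta> a b + \<beta> a b') \<and>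
    (\<forall>c a b. \<beta> (scA c a) b = c * \<beta> a b) \<and> (\<forall>c a b. \<beta> a (scA c b) = c * \<beta> a b)"
  unfolding bil_def lin_def clin_def by blast

lemma bil_sum_left: "bil \<beta> \<Longrightarrow> \<beta> (\<Sum>i\<in>I. scA (\<mu> i) (x i)) b = (\<Sum>i\<in>I. \<mu> i * \<beta> (x i) b)"
  and bil_sum_right: "bil \<beta> \<Longrightarrow> \<beta> a (\<Sum>i\<in>I. scA (\<mu> i) (x i)) = (\<Sum>i\<in>I. \<mu> i * \<beta> a (x i))"
  unfolding bil_def by (auto intro: lin_sum)

lemma bil_zero: "bil \<beta> \<Longrightarrow> \<beta> 0 b = 0" "bil \<beta> \<Longrightarrow> \<beta> a 0 = 0"
  unfolding bil_def by (auto intro: lin_zero)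

lemma bil_sum_left_plain: "bil \<beta> \<Longrightarrow> \<beta> (\<Sum>i\<in>I. x i) b = (\<Sum>i\<in>I. \<beta> (x i) b)"
  using bil_sum_left[where \<mu>="\<lambda>_. 1"] by (simp add: scA_one)

lemma bil_sum_right_plain: "bil \<beta> \<Longrightarrow> \<beta> a (\<Sum>i\<in>I. x i) = (\<Sum>i\<in>I. \<beta> a (x i))"
  using bil_sum_right[where \<mu>="\<lambda>_. 1"] by (simp add: scA_one)

lemma bil_product: "lin f \<Longrightarrow> lin g \<Longrightarrow> bil (\<lambda>a b. f a * g b)"
  unfolding bil_iff lin_def clin_def by (auto simp: algebra_simps)

lemma bil_flip: "bil \<beta> \<Longrightarrow> bil (\<lambda>a b. \<beta> b a)"
  unfolding bil_def by blast

lemma zero_if_lin_right_mult_vanish: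
  assumes "\<And>f c. lin f \<Longrightarrow> f (x * c) = 0"
  shows "x = 0"
proof -
  have "x * c = 0" for c
  proof -
    obtain E g where E: "finite E" "\<forall>e. lin (g e)" "x * c = (\<Sum>e\<in>E. scA (g e (x * c)) e)"
      using complex_space.finite_coordinates[OF spaceA, of "{x * c}"] unfolding lin_def by auto
    moreover have "g e (x * c) = 0" for e using assms E(2) by blast
    ultimately show ?thesis by simp
  qed
  then show ?thesis using A_nondeg by blast
qed

abbreviation ker :: "('a \<times> 'a \<Rightarrow> complex) set" where
  "ker \<equiv> balA_ker scA s t"

definition balanced_rel :: "('a \<times> 'a \<Rightarrow> complex) set" where
  "balanced_rel = bil_rel scA scA \<union> {\<lambda>q. delta (s x a, b) q - delta (a, t x b) q |x a b. True}"

lemma ker_eq_fspan: "ker = fspan balanced_rel"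
  unfolding balA_ker_def balanced_rel_def ..

lemma fsupp_balanced_rel: "r \<in> balanced_rel \<Longrightarrow> fsupp r"
  unfolding balanced_rel_def bil_rel_def
  by (auto simp: fsupp_delta_diff3 fsupp_delta_diff fsupp_delta_diff1)

lemma bal_kills_balanced_rel:
  "bal \<beta> \<Longrightarrow> r \<in> balanced_rel \<Longrightarrow> feval (\<lambda>p. \<beta> (fst p) (snd p)) r = 0"
  unfolding balanced_rel_def bil_rel_def bal_def bil_iff
  by (auto simp: feval_delta_diff3 feval_delta_diff feval_delta_diff1)

lemma bal_if_kills_balanced_rel:
  assumes r: "\<And>r. r \<in> balanced_rel \<Longrightarrow> feval \<phi> r = 0"
  shows "bal (\<lambda>a b. \<phi> (a, b))"
proof -
  have "\<phi> (a + a', b) = \<phi> (a, b) + \<phi> (a', b)" for a a' b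
  proof -
    have "feval \<phi> (\<lambda>q. delta (a + a', b) q - delta (a, b) q - delta (a', b) q) = 0"
      by (rule r) (unfold balanced_rel_def bil_rel_def, blast)
    then show ?thesis unfolding feval_delta_diff3 by (simp add: diff_diff_eq)
  qed
  moreover have "\<phi> (a, b + b') = \<phi> (a, b) + \<phi> (a, b')" for a b b'
  proof -
    have "feval \<phi> (\<lambda>q. delta (a, b + b') q - delta (a, b) q - delta (a, b') q) = 0"
      by (rule r) (unfold balanced_rel_def bil_rel_def, blast)
    then show ?thesis unfolding feval_delta_diff3 by (simp add: diff_diff_eq)
  qed
  moreover have "\<phi> (scA c a, b) = c * \<phi> (a, b)" for c a b
  proof -
    have "feval \<phi> (\<lambda>q. delta (scA c a, b) q - c * delta (a, b) q) = 0"
      by (rule r) (unfold balanced_rel_def bil_rel_def, blast)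
    then show ?thesis unfolding feval_delta_diff by simp
  qed
  moreover have "\<phi> (a, scA c b) = c * \<phi> (a, b)" for c a b
  proof -
    have "feval \<phi> (\<lambda>q. delta (a, scA c b) q - c * delta (a, b) q) = 0"
      by (rule r) (unfold balanced_rel_def bil_rel_def, blast)
    then show ?thesis unfolding feval_delta_diff by simp
  qed
  moreover have "\<phi> (s x a, b) = \<phi> (a, t x b)" for x a b
  proof -
    have "feval \<phi> (\<lambda>q. delta (s x a, b) q - delta (a, t x b) q) = 0"
      by (rule r) (unfold balanced_rel_def, blast)
    then show ?thesis unfolding feval_delta_diff1 by simp
  qed
  ultimately show ?thesis unfolding bal_def bil_iff by blast
qed

lemma in_ker_iff_balanced_forms_vanish:
  assumes w: "fsupp w"
  shows "w \<in> ker \<longleftrightarrow> (\<forall>\<beta>. bal \<beta> \<longrightarrow> feval (\<lambda>p. \<beta> (fst p) (snd p)) w = 0)"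
proof (intro iffI allI impI)
  fix \<beta> assume "w \<in> ker" "bal \<beta>"
  then have "\<forall>r\<in>balanced_rel. fsupp r \<and> feval (\<lambda>p. \<beta> (fst p) (snd p)) r = 0"
    using fsupp_balanced_rel bal_kills_balanced_rel by blast
  then show "feval (\<lambda>p. \<beta> (fst p) (snd p)) w = 0"
    using \<open>w \<in> ker\<close> unfolding ker_eq_fspan by (rule feval_fspan)
next
  assume vanish: "\<forall>\<beta>. bal \<beta> \<longrightarrow> feval (\<lambda>p. \<beta> (fst p) (snd p)) w = 0"
  show "w \<in> ker"
  proof (rule ccontr)
    assume "w \<notin> ker"
    moreover have "\<forall>r\<in>balanced_rel. fsupp r" using fsupp_balanced_rel by blast
    ultimately obtain \<phi> where \<phi>: "\<forall>r\<in>balanced_rel. feval \<phi> r = 0" "feval \<phi> w \<noteq> 0"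
      using fspan_separating_functional[OF _ w] unfolding ker_eq_fspan by blast
    have "bal (\<lambda>a b. \<phi> (a, b))" using \<phi>(1) by (intro bal_if_kills_balanced_rel) blast
    then have "feval (\<lambda>p. \<phi> (fst p, snd p)) w = 0" using vanish by blast
    then show False using \<phi>(2) by simp
  qed
qed

definition balanced_forms_nondeg_fst :: bool where
  "balanced_forms_nondeg_fst \<longleftrightarrow> (\<forall>w. fsupp w \<longrightarrow>
     (\<forall>\<beta> c. bal \<beta> \<longrightarrow> feval (\<lambda>p. \<beta> (fst p * c) (snd p)) w = 0) \<longrightarrow>
     (\<forall>\<beta>. bal \<beta> \<longrightarrow> feval (\<lambda>p. \<beta> (fst p) (snd p)) w = 0))"

definition balanced_forms_nondeg_snd :: bool where
  "balanced_forms_nondeg_snd \<longleftrightarrow> (\<forall>w. fsupp w \<longrightarrow>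
     (\<forall>\<beta> c. bal \<beta> \<longrightarrow> feval (\<lambda>p. \<beta> (fst p) (snd p * c)) w = 0) \<longrightarrow>
     (\<forall>\<beta>. bal \<beta> \<longrightarrow> feval (\<lambda>p. \<beta> (fst p) (snd p)) w = 0))"

lemma balanced_forms_nondeg_fstI:
  assumes "\<And>(wt :: 'a \<times> 'a \<Rightarrow> complex) I a b \<beta>. finite I \<Longrightarrow>
      \<forall>\<beta> c. bal \<beta> \<longrightarrow> (\<Sum>i\<in>I. wt i * \<beta> (a i * c) (b i)) = 0 \<Longrightarrow> bal \<beta> \<Longrightarrow>
      (\<Sum>i\<in>I. wt i * \<beta> (a i) (b i)) = 0"
  shows balanced_forms_nondeg_fst
  unfolding balanced_forms_nondeg_fst_def feval_def fsupp_def using assms by blast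

lemma balanced_forms_nondeg_sndI:
  assumes "\<And>(wt :: 'a \<times> 'a \<Rightarrow> complex) I a b \<beta>. finite I \<Longrightarrow>
      \<forall>\<beta> c. bal \<beta> \<longrightarrow> (\<Sum>i\<in>I. wt i * \<beta> (a i) (b i * c)) = 0 \<Longrightarrow> bal \<beta> \<Longrightarrow>
      (\<Sum>i\<in>I. wt i * \<beta> (a i) (b i)) = 0"
  shows balanced_forms_nondeg_snd
  unfolding balanced_forms_nondeg_snd_def feval_def fsupp_def using assms by blast

lemma ker_nondeg_fst:
  assumes balanced_forms_nondeg_fst "fsupp w" "\<forall>c. fmap (\<lambda>p. (fst p * c, snd p)) w \<in> ker"
  shows "w \<in> ker"
proof -
  have "feval (\<lambda>p. \<beta> (fst p * c) (snd p)) w = 0" if "bal \<beta>" for \<beta> c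
    using assms(3) that unfolding in_ker_iff_balanced_forms_vanish[OF fsupp_fmap[OF assms(2)]]
    by (simp only: feval_fmap[OF assms(2)]) (simp add: feval_def)
  then show ?thesis
    using assms(1,2) unfolding in_ker_iff_balanced_forms_vanish[OF assms(2)] balanced_forms_nondeg_fst_def
    by blast
qed

lemma ker_nondeg_snd:
  assumes balanced_forms_nondeg_snd "fsupp w" "\<forall>c. fmap (\<lambda>p. (fst p, snd p * c)) w \<in> ker"
  shows "w \<in> ker"
proof -
  have "feval (\<lambda>p. \<beta> (fst p) (snd p * c)) w = 0" if "bal \<beta>" for \<beta> c
    using assms(3) that unfolding in_ker_iff_balanced_forms_vanish[OF fsupp_fmap[OF assms(2)]]
    by (simp only: feval_fmap[OF assms(2)]) (simp add: feval_def)
  then show ?thesis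
    using assms(1,2) unfolding in_ker_iff_balanced_forms_vanish[OF assms(2)] balanced_forms_nondeg_snd_def
    by blast
qed

subsection \<open>Local units\<close>

lemma local_units_nondeg_fst:
  assumes lu: "\<forall>F::'a set. finite F \<longrightarrow> (\<exists>e. \<forall>a\<in>F. a * e = a)" and fin: "finite I"
    and H: "\<forall>\<beta> c. bal \<beta> \<longrightarrow> (\<Sum>i\<in>I. wt i * \<beta> (a i * c) (b i)) = 0" and "bal \<beta>"
  shows "(\<Sum>i\<in>I. wt i * \<beta> (a i) (b i)) = 0"
proof -
  obtain e where "\<forall>x\<in>a ` I. x * e = x" using lu fin by blast
  then have "(\<Sum>i\<in>I. wt i * \<beta> (a i) (b i)) = (\<Sum>i\<in>I. wt i * \<beta> (a i * e) (b i))" by simp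
  then show ?thesis using H \<open>bal \<beta>\<close> by simp
qed

lemma local_units_nondeg_snd:
  assumes lu: "\<forall>F::'a set. finite F \<longrightarrow> (\<exists>e. \<forall>a\<in>F. a * e = a)" and fin: "finite I"
    and H: "\<forall>\<beta> c. bal \<beta> \<longrightarrow> (\<Sum>i\<in>I. wt i * \<beta> (a i) (b i * c)) = 0" and "bal \<beta>"
  shows "(\<Sum>i\<in>I. wt i * \<beta> (a i) (b i)) = 0"
proof -
  obtain e where "\<forall>x\<in>b ` I. x * e = x" using lu fin by blast
  then have "(\<Sum>i\<in>I. wt i * \<beta> (a i) (b i)) = (\<Sum>i\<in>I. wt i * \<beta> (a i) (b i * e))" by simp
  then show ?thesis using H \<open>bal \<beta>\<close> by simp
qed

subsection \<open>Bilinear forms on the ordinary tensor product\<close>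

lemma bil_forms_nondeg_fst:
  assumes fin: "finite I"
    and H: "\<forall>\<gamma> c. bil \<gamma> \<longrightarrow> (\<Sum>i\<in>I. wt i * \<gamma> (a i * c) (b i)) = 0"
    and g: "bil \<gamma>"
  shows "(\<Sum>i\<in>I. wt i * \<gamma> (a i) (b i)) = 0"
proof -
  obtain E g where E: "finite E" "\<forall>e. lin (g e)" "\<forall>x\<in>b ` I. x = (\<Sum>e\<in>E. scA (g e x) e)"
    using complex_space.finite_coordinates[OF spaceA, of "b ` I"] fin unfolding lin_def by auto
  define \<alpha> where "\<alpha> e = (\<Sum>i\<in>I. scA (wt i * g e (b i)) (a i))" for e
  have \<alpha>: "\<alpha> e = 0" for e
  proof (rule zero_if_lin_right_mult_vanish)
    fix f c assume f: "lin f"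
    have "\<alpha> e * c = (\<Sum>i\<in>I. scA (wt i * g e (b i)) (a i * c))"
      unfolding \<alpha>_def sum_distrib_right by (simp add: scA_mult)
    then have "f (\<alpha> e * c) = (\<Sum>i\<in>I. (wt i * g e (b i)) * f (a i * c))"
      by (simp add: lin_sum[OF f])
    also have "\<dots> = (\<Sum>i\<in>I. wt i * (\<lambda>x y. f x * g e y) (a i * c) (b i))"
      by (simp add: algebra_simps)
    also have "\<dots> = 0" using H bil_product[OF f E(2)[rule_format, of e]] by blast
    finally show "f (\<alpha> e * c) = 0" .
  qed
  have "(\<Sum>i\<in>I. wt i * \<gamma> (a i) (b i)) = (\<Sum>i\<in>I. wt i * \<gamma> (a i) (\<Sum>e\<in>E. scA (g e (b i)) e))"
    using E(3) by (intro sum.cong) auto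
  also have "\<dots> = (\<Sum>i\<in>I. \<Sum>e\<in>E. wt i * g e (b i) * \<gamma> (a i) e)"
    by (simp add: bil_sum_right[OF g] sum_distrib_left mult.assoc)
  also have "\<dots> = (\<Sum>e\<in>E. \<Sum>i\<in>I. wt i * g e (b i) * \<gamma> (a i) e)"
    by (rule sum.swap)
  also have "\<dots> = (\<Sum>e\<in>E. \<gamma> (\<alpha> e) e)"
    unfolding \<alpha>_def by (simp add: bil_sum_left[OF g])
  also have "\<dots> = 0" by (simp add: \<alpha> bil_zero[OF g])
  finally show ?thesis .
qed

lemma bil_forms_nondeg_snd:
  assumes "finite I"
    and "\<forall>\<gamma> c. bil \<gamma> \<longrightarrow> (\<Sum>i\<in>I. wt i * \<gamma> (a i) (b i * c)) = 0"
    and "bil \<gamma>"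
  shows "(\<Sum>i\<in>I. wt i * \<gamma> (a i) (b i)) = 0"
  using bil_forms_nondeg_fst[of I wt b a "\<lambda>x y. \<gamma> y x"] assms bil_flip by blast

subsection \<open>Separability multipliers\<close>

definition twist :: "('a \<Rightarrow> 'a \<Rightarrow> complex) \<Rightarrow> ('b \<times> 'b \<Rightarrow> complex) \<Rightarrow> 'a \<Rightarrow> 'a \<Rightarrow> complex" where
  "twist \<gamma> D a b = feval (\<lambda>p. \<gamma> (s (fst p) a) (t (snd p) b)) D"

lemma twist_teq:
  assumes g: "bil \<gamma>" and D: "fsupp D" and D': "fsupp D'" and eq: "teq scB D D'"
  shows "twist \<gamma> D a b = twist \<gamma> D' a b"
proof -
  have "\<forall>r\<in>bil_rel scB scB. fsupp r \<and> feval (\<lambda>p. \<gamma> (s (fst p) a) (t (snd p) b)) r = 0"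
    using g unfolding bil_rel_def bil_iff
    by (auto simp: fsupp_delta_diff3 fsupp_delta_diff feval_delta_diff3 feval_delta_diff
        s_add_B s_scale_B t_add_B t_scale_B)
  then have "feval (\<lambda>p. \<gamma> (s (fst p) a) (t (snd p) b)) (\<lambda>q. D q - D' q) = 0"
    using eq unfolding teq_def by (rule feval_fspan)
  then show ?thesis unfolding twist_def feval_diff[OF D D'] by simp
qed

lemma twist_bop_mul_delta:
  assumes "fsupp D"
  shows "twist \<gamma> (bop_mul D (delta (x1, x2))) a b = twist \<gamma> D (s x1 a) (t x2 b)"
  unfolding twist_def bop_mul_delta feval_fmap[OF assms] by (simp add: feval_def s_times t_times)

lemma twist_mult_fst: "twist (\<lambda>u v. \<gamma> (u * c) v) D a b = twist \<gamma> D (a * c) b"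
  and twist_mult_snd: "twist (\<lambda>u v. \<gamma> u (v * c)) D a b = twist \<gamma> D a (b * c)"
  unfolding twist_def by (simp_all add: s_mult t_mult)

lemma bil_twist: "bil \<gamma> \<Longrightarrow> bil (twist \<gamma> D)"
  unfolding bil_iff twist_def feval_def
  by (simp add: s_add s_scale t_add t_scale distrib_left sum.distrib sum_distrib_left mult.left_commute)

lemma bil_compose_s: "bil \<beta> \<Longrightarrow> bil (\<lambda>a b. \<beta> (s x a) b)"
  and bil_compose_t: "bil \<beta> \<Longrightarrow> bil (\<lambda>a b. \<beta> a (t x b))"
  unfolding bil_iff by (simp_all add: s_add s_scale t_add t_scale)

lemma bil_eq_if_eq_on_actions:
  assumes P: "bil P" and Q: "bil Q"
    and H: "\<And>x1 x2 a b. P (s x1 a) (t x2 b) = Q (s x1 a) (t x2 b)"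
  shows "P a' b' = Q a' b'"
proof -
  obtain n :: nat and \<mu> y c where a: "a' = (\<Sum>k<n. scA (\<mu> k) (s (y k) (c k)))"
    by (rule s_decomposition)
  obtain n' :: nat and \<nu> y' c' where b: "b' = (\<Sum>l<n'. scA (\<nu> l) (t (y' l) (c' l)))"
    by (rule t_decomposition)
  have "P (s (y k) (c k)) b' = Q (s (y k) (c k)) b'" for k
    unfolding b by (simp add: bil_sum_right[OF P] bil_sum_right[OF Q] H)
  then show ?thesis
    unfolding a by (simp add: bil_sum_left[OF P] bil_sum_left[OF Q])
qed

context
  fixes E assumes sep: "left_sep_mult scB E"
begin

lemma fsupp_sep_mult: "fsupp f \<Longrightarrow> fsupp (E f)"
  using sep unfolding left_sep_mult_def in_M_BBop_def by blast

definition sep_elem :: "'b \<Rightarrow> ('b \<times> 'b \<Rightarrow> complex)" where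
  "sep_elem x = (SOME d. fsupp d \<and>
     (\<forall>f. fsupp f \<longrightarrow>
        teq scB (E (fmap (\<lambda>p. (x * fst p, snd p)) f)) (bop_mul d f) \<and>
        teq scB (E (fmap (\<lambda>p. (fst p, snd p * x)) f)) (bop_mul d f)) \<and>
     fsum scB d (\<lambda>p. snd p * fst p) = x)"

lemma sep_elem:
  "fsupp (sep_elem x)"
  "\<And>f. fsupp f \<Longrightarrow> teq scB (E (fmap (\<lambda>p. (x * fst p, snd p)) f)) (bop_mul (sep_elem x) f)"
  "\<And>f. fsupp f \<Longrightarrow> teq scB (E (fmap (\<lambda>p. (fst p, snd p * x)) f)) (bop_mul (sep_elem x) f)"
  "fsum scB (sep_elem x) (\<lambda>p. snd p * fst p) = x"
proof -
  have "\<exists>d. fsupp d \<and>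
     (\<forall>f. fsupp f \<longrightarrow>
        teq scB (E (fmap (\<lambda>p. (x * fst p, snd p)) f)) (bop_mul d f) \<and>
        teq scB (E (fmap (\<lambda>p. (fst p, snd p * x)) f)) (bop_mul d f)) \<and>
     fsum scB d (\<lambda>p. snd p * fst p) = x"
    using sep unfolding left_sep_mult_def by blast
  from someI_ex[OF this] show
    "fsupp (sep_elem x)"
    "\<And>f. fsupp f \<Longrightarrow> teq scB (E (fmap (\<lambda>p. (x * fst p, snd p)) f)) (bop_mul (sep_elem x) f)"
    "\<And>f. fsupp f \<Longrightarrow> teq scB (E (fmap (\<lambda>p. (fst p, snd p * x)) f)) (bop_mul (sep_elem x) f)"
    "fsum scB (sep_elem x) (\<lambda>p. snd p * fst p) = x"
    unfolding sep_elem_def by auto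
qed

lemma finite_supp_sep_elem: "finite {q. sep_elem x q \<noteq> 0}"
  using sep_elem(1) unfolding fsupp_def .

lemma twist_sep_elem_left:
  assumes "bil \<gamma>"
  shows "twist \<gamma> (sep_elem x) (s x1 a) (t x2 b) = twist \<gamma> (E (delta (x * x1, x2))) a b"
proof -
  have "twist \<gamma> (sep_elem x) (s x1 a) (t x2 b) = twist \<gamma> (bop_mul (sep_elem x) (delta (x1, x2))) a b"
    by (rule twist_bop_mul_delta[OF sep_elem(1), symmetric])
  also have "\<dots> = twist \<gamma> (E (fmap (\<lambda>p. (x * fst p, snd p)) (delta (x1, x2)))) a b"
    using twist_teq[OF assms fsupp_sep_mult[OF fsupp_fmap[OF fsupp_delta]]
        fsupp_bop_mul_delta[OF sep_elem(1)] sep_elem(2)[OF fsupp_delta]] by simp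
  finally show ?thesis by (simp add: fmap_delta)
qed

lemma twist_sep_elem_right:
  assumes "bil \<gamma>"
  shows "twist \<gamma> (sep_elem x) (s x1 a) (t x2 b) = twist \<gamma> (E (delta (x1, x2 * x))) a b"
proof -
  have "twist \<gamma> (sep_elem x) (s x1 a) (t x2 b) = twist \<gamma> (bop_mul (sep_elem x) (delta (x1, x2))) a b"
    by (rule twist_bop_mul_delta[OF sep_elem(1), symmetric])
  also have "\<dots> = twist \<gamma> (E (fmap (\<lambda>p. (fst p, snd p * x)) (delta (x1, x2)))) a b"
    using twist_teq[OF assms fsupp_sep_mult[OF fsupp_fmap[OF fsupp_delta]]
        fsupp_bop_mul_delta[OF sep_elem(1)] sep_elem(3)[OF fsupp_delta]] by simp
  finally show ?thesis by (simp add: fmap_delta)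
qed

lemma twist_sep_elem_swap:
  assumes g: "bil \<gamma>"
  shows "twist \<gamma> (sep_elem x') (s x a) b = twist \<gamma> (sep_elem x) a (t x' b)"
proof (rule bil_eq_if_eq_on_actions[OF bil_compose_s[OF bil_twist[OF g]] bil_compose_t[OF bil_twist[OF g]]])
  fix x1 x2 a b
  have "twist \<gamma> (sep_elem x') (s x (s x1 a)) (t x2 b) = twist \<gamma> (E (delta (x * x1, x2 * x'))) a b"
    by (simp add: s_times[symmetric] twist_sep_elem_right[OF g])
  also have "\<dots> = twist \<gamma> (sep_elem x) (s x1 a) (t x' (t x2 b))"
    by (simp add: t_times[symmetric] twist_sep_elem_left[OF g])
  finally show "twist \<gamma> (sep_elem x') (s x (s x1 a)) (t x2 b) = twist \<gamma> (sep_elem x) (s x1 a) (t x' (t x2 b))" .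
qed

lemma twist_sep_elem_mult:
  assumes g: "bil \<gamma>"
  shows "twist \<gamma> (sep_elem (z * x)) a b = twist \<gamma> (sep_elem z) (s x a) b"
proof (rule bil_eq_if_eq_on_actions[OF bil_twist[OF g] bil_compose_s[OF bil_twist[OF g]]])
  fix x1 x2 a b
  show "twist \<gamma> (sep_elem (z * x)) (s x1 a) (t x2 b) = twist \<gamma> (sep_elem z) (s x (s x1 a)) (t x2 b)"
    by (simp add: s_times[symmetric] twist_sep_elem_left[OF g] mult.assoc)
qed

lemma twist_sep_elem_decompositions:
  assumes g: "bil \<gamma>"
    and a: "a = (\<Sum>k<n. scA (\<mu> k) (s (y k) (c k)))"
    and b: "b = (\<Sum>l<n'. scA (\<nu> l) (t (y' l) (c' l)))"
  shows "(\<Sum>k<n. \<mu> k * twist \<gamma> (sep_elem (y k)) (c k) b) =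
         (\<Sum>l<n'. \<nu> l * twist \<gamma> (sep_elem (y' l)) a (c' l))"
proof -
  have "(\<Sum>k<n. \<mu> k * twist \<gamma> (sep_elem (y k)) (c k) b) =
        (\<Sum>k<n. \<Sum>l<n'. \<mu> k * (\<nu> l * twist \<gamma> (sep_elem (y' l)) (s (y k) (c k)) (c' l)))"
    unfolding b by (simp add: bil_sum_right[OF bil_twist[OF g]] sum_distrib_left twist_sep_elem_swap[OF g])
  also have "\<dots> = (\<Sum>l<n'. \<Sum>k<n. \<mu> k * (\<nu> l * twist \<gamma> (sep_elem (y' l)) (s (y k) (c k)) (c' l)))"
    by (rule sum.swap)
  also have "\<dots> = (\<Sum>l<n'. \<nu> l * twist \<gamma> (sep_elem (y' l)) a (c' l))"
    unfolding a by (simp add: bil_sum_left[OF bil_twist[OF g]] sum_distrib_left mult.left_commute)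
  finally show ?thesis .
qed

text \<open>The balanced form \<open>\<gamma>\<^sup>E\<close> obtained from a bilinear form \<open>\<gamma>\<close>: on \<open>s y c\<close> it is
  \<open>\<gamma>\<close> twisted by \<open>E (y \<otimes> 1)\<close>, extended along a chosen decomposition of the first
  argument; by \<open>twist_sep_elem_decompositions\<close> the choice does not matter.\<close>

definition sep_form :: "('a \<Rightarrow> 'a \<Rightarrow> complex) \<Rightarrow> 'a \<Rightarrow> 'a \<Rightarrow> complex" where
  "sep_form \<gamma> a b = (case s_decomp a of (n, \<mu>, y, c) \<Rightarrow>
     \<Sum>k<n. \<mu> k * twist \<gamma> (sep_elem (y k)) (c k) b)"

lemma sep_form_t_decomposition:
  assumes g: "bil \<gamma>" and b: "b = (\<Sum>l<n'. scA (\<nu> l) (t (y' l) (c' l)))"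
  shows "sep_form \<gamma> a b = (\<Sum>l<n'. \<nu> l * twist \<gamma> (sep_elem (y' l)) a (c' l))"
proof -
  obtain n \<mu> y c where d: "s_decomp a = (n, \<mu>, y, c)" by (cases "s_decomp a") auto
  then have "a = (\<Sum>k<n. scA (\<mu> k) (s (y k) (c k)))" using s_decomp[of a] by simp
  then show ?thesis
    unfolding sep_form_def d by (simp add: twist_sep_elem_decompositions[OF g _ b])
qed

lemma sep_form_s_decomposition:
  assumes g: "bil \<gamma>" and a: "a = (\<Sum>k<n. scA (\<mu> k) (s (y k) (c k)))"
  shows "sep_form \<gamma> a b = (\<Sum>k<n. \<mu> k * twist \<gamma> (sep_elem (y k)) (c k) b)"
proof -
  obtain n' :: nat and \<nu> y' c' where b: "b = (\<Sum>l<n'. scA (\<nu> l) (t (y' l) (c' l)))"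
    by (rule t_decomposition)
  show ?thesis
    unfolding sep_form_t_decomposition[OF g b] twist_sep_elem_decompositions[OF g a b] ..
qed

lemma bil_sep_form:
  assumes g: "bil \<gamma>"
  shows "bil (sep_form \<gamma>)"
proof -
  have tw: "bil (twist \<gamma> D)" for D by (rule bil_twist[OF g])
  have "sep_form \<gamma> (a1 + a2) b = sep_form \<gamma> a1 b + sep_form \<gamma> a2 b"
    "sep_form \<gamma> (scA c a) b = c * sep_form \<gamma> a b" for a a1 a2 b c
  proof -
    obtain n' :: nat and \<nu> y' c' where b: "b = (\<Sum>l<n'. scA (\<nu> l) (t (y' l) (c' l)))"
      by (rule t_decomposition)
    show "sep_form \<gamma> (a1 + a2) b = sep_form \<gamma> a1 b + sep_form \<gamma> a2 b"
         "sep_form \<gamma> (scA c a) b = c * sep_form \<gamma> a b"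
      using tw unfolding sep_form_t_decomposition[OF g b] bil_iff
      by (simp_all add: distrib_left sum.distrib sum_distrib_left mult.left_commute)
  qed
  moreover have "sep_form \<gamma> a (b1 + b2) = sep_form \<gamma> a b1 + sep_form \<gamma> a b2"
    "sep_form \<gamma> a (scA c b) = c * sep_form \<gamma> a b" for a b b1 b2 c
  proof -
    obtain n :: nat and \<mu> y c' where a: "a = (\<Sum>k<n. scA (\<mu> k) (s (y k) (c' k)))"
      by (rule s_decomposition)
    show "sep_form \<gamma> a (b1 + b2) = sep_form \<gamma> a b1 + sep_form \<gamma> a b2"
         "sep_form \<gamma> a (scA c b) = c * sep_form \<gamma> a b"
      using tw unfolding sep_form_s_decomposition[OF g a] bil_iff
      by (simp_all add: distrib_left sum.distrib sum_distrib_left mult.left_commute)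
  qed
  ultimately show ?thesis unfolding bil_iff by blast
qed

lemma bal_sep_form:
  assumes g: "bil \<gamma>"
  shows "bal (sep_form \<gamma>)"
proof -
  have "sep_form \<gamma> (s x a) b = sep_form \<gamma> a (t x b)" for x a b
  proof -
    obtain n :: nat and \<mu> y c where a: "a = (\<Sum>k<n. scA (\<mu> k) (s (y k) (c k)))"
      by (rule s_decomposition)
    then have "s x a = (\<Sum>k<n. scA (\<mu> k) (s (x * y k) (c k)))"
      by (simp add: s_sum s_times)
    then have "sep_form \<gamma> (s x a) b = (\<Sum>k<n. \<mu> k * twist \<gamma> (sep_elem (x * y k)) (c k) b)"
      by (rule sep_form_s_decomposition[OF g])
    also have "\<dots> = (\<Sum>k<n. \<mu> k * twist \<gamma> (sep_elem (y k)) (c k) (t x b))"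
      by (simp add: twist_sep_elem_mult[OF g] twist_sep_elem_swap[OF g])
    also have "\<dots> = sep_form \<gamma> a (t x b)"
      by (rule sep_form_s_decomposition[OF g a, symmetric])
    finally show ?thesis .
  qed
  then show ?thesis unfolding bal_def using bil_sep_form[OF g] by blast
qed

lemma twist_sep_elem_bal_left:
  assumes bt: "bal \<beta>"
  shows "twist \<beta> (sep_elem x) a b = \<beta> (s x a) b"
proof -
  have b: "bil \<beta>" and bb: "\<forall>x a b. \<beta> (s x a) b = \<beta> a (t x b)" using bt unfolding bal_def by auto
  let ?S = "{p. sep_elem x p \<noteq> 0}"
  have "twist \<beta> (sep_elem x) a b = (\<Sum>p\<in>?S. sep_elem x p * \<beta> (s (snd p * fst p) a) b)"
    unfolding twist_def feval_def using bb by (simp add: s_times)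
  also have "\<dots> = \<beta> (s (\<Sum>p\<in>?S. scB (sep_elem x p) (snd p * fst p)) a) b"
    by (simp add: s_sum_B bil_sum_left[OF b])
  also have "\<dots> = \<beta> (s x a) b"
    using sep_elem(4)[of x] unfolding fsum_def by simp
  finally show ?thesis .
qed

lemma twist_sep_elem_bal_right:
  assumes bt: "bal \<beta>"
  shows "twist \<beta> (sep_elem x) a b = \<beta> a (t x b)"
  using twist_sep_elem_bal_left[OF bt] bt unfolding bal_def by simp

lemma sum_Sigma_sep_elem:
  fixes N :: "'i \<Rightarrow> nat"
  assumes "finite I"
  shows "(\<Sum>(i, k, q)\<in>(SIGMA i:I. SIGMA k:{..<N i}. {q. sep_elem (y i k) q \<noteq> 0}).
           wt i * \<mu> i k * sep_elem (y i k) q * \<gamma> (s (fst q) (u i k)) (t (snd q) (v i k))) =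
         (\<Sum>i\<in>I. wt i * (\<Sum>k<N i. \<mu> i k * twist \<gamma> (sep_elem (y i k)) (u i k) (v i k)))"
  unfolding twist_def feval_def
  by (subst sum_Sigma_Sigma) (simp_all add: assms finite_supp_sep_elem sum_distrib_left mult.assoc)

lemma sep_mult_nondeg_fst:
  assumes fin: "finite I"
    and H: "\<forall>\<beta> c. bal \<beta> \<longrightarrow> (\<Sum>i\<in>I. wt i * \<beta> (a i * c) (b i)) = 0" and bt: "bal \<beta>"
  shows "(\<Sum>i\<in>I. wt i * \<beta> (a i) (b i)) = 0"
proof -
  obtain N :: "_ \<Rightarrow> nat" and \<mu> y c where dec: "\<And>i. a i = (\<Sum>k<N i. scA (\<mu> i k) (s (y i k) (c i k)))"
    using s_decompositions[of a] by blast
  define J where "J = (SIGMA i:I. SIGMA k:{..<N i}. {q. sep_elem (y i k) q \<noteq> 0})"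
  define W where "W = (\<lambda>(i, k, q :: 'b \<times> 'b). wt i * \<mu> i k * sep_elem (y i k) q)"
  define A where "A = (\<lambda>(i, k, q :: 'b \<times> 'b). s (fst q) (c i k))"
  define B' where "B' = (\<lambda>(i, k :: nat, q :: 'b \<times> 'b). t (snd q) (b i))"
  have finJ: "finite J" unfolding J_def using fin finite_supp_sep_elem by (intro finite_SigmaI) auto
  have reindex: "(\<Sum>x\<in>J. W x * \<gamma> (A x) (B' x)) =
      (\<Sum>i\<in>I. wt i * (\<Sum>k<N i. \<mu> i k * twist \<gamma> (sep_elem (y i k)) (c i k) (b i)))" for \<gamma>
    using sum_Sigma_sep_elem[OF fin, where N=N and y=y and wt=wt and \<mu>=\<mu> and \<gamma>=\<gamma>
        and u="\<lambda>i k. c i k" and v="\<lambda>i k. b i"]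
    unfolding J_def W_def A_def B'_def by (simp add: split_beta)
  have "(\<Sum>x\<in>J. W x * \<gamma> (A x * c') (B' x)) = 0" if "bil \<gamma>" for \<gamma> c'
  proof -
    have "(\<Sum>x\<in>J. W x * \<gamma> (A x * c') (B' x)) =
        (\<Sum>i\<in>I. wt i * (\<Sum>k<N i. \<mu> i k * twist \<gamma> (sep_elem (y i k)) (c i k * c') (b i)))"
      using reindex[of "\<lambda>u v. \<gamma> (u * c') v"] by (simp add: twist_mult_fst)
    also have "\<dots> = (\<Sum>i\<in>I. wt i * sep_form \<gamma> (a i * c') (b i))"
    proof -
      have "a i * c' = (\<Sum>k<N i. scA (\<mu> i k) (s (y i k) (c i k * c')))" for i
        by (subst dec) (simp add: sum_distrib_right scA_mult(1) s_mult)
      then show ?thesis by (simp add: sep_form_s_decomposition[OF that])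
    qed
    also have "\<dots> = 0" using H bal_sep_form[OF that] by blast
    finally show ?thesis .
  qed
  moreover have b: "bil \<beta>" using bt unfolding bal_def by blast
  ultimately have "(\<Sum>x\<in>J. W x * \<beta> (A x) (B' x)) = 0"
    using bil_forms_nondeg_fst[OF finJ] by blast
  moreover have "(\<Sum>x\<in>J. W x * \<beta> (A x) (B' x)) = (\<Sum>i\<in>I. wt i * \<beta> (a i) (b i))"
    unfolding reindex twist_sep_elem_bal_left[OF bt] dec
    by (simp add: bil_sum_left[OF b])
  ultimately show ?thesis by simp
qed

lemma sep_mult_nondeg_snd:
  assumes fin: "finite I"
    and H: "\<forall>\<beta> c. bal \<beta> \<longrightarrow> (\<Sum>i\<in>I. wt i * \<beta> (a i) (b i * c)) = 0" and bt: "bal \<beta>"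
  shows "(\<Sum>i\<in>I. wt i * \<beta> (a i) (b i)) = 0"
proof -
  obtain N :: "_ \<Rightarrow> nat" and \<mu> y c where dec: "\<And>i. b i = (\<Sum>k<N i. scA (\<mu> i k) (t (y i k) (c i k)))"
    using t_decompositions[of b] by blast
  define J where "J = (SIGMA i:I. SIGMA k:{..<N i}. {q. sep_elem (y i k) q \<noteq> 0})"
  define W where "W = (\<lambda>(i, k, q :: 'b \<times> 'b). wt i * \<mu> i k * sep_elem (y i k) q)"
  define A where "A = (\<lambda>(i, k :: nat, q :: 'b \<times> 'b). s (fst q) (a i))"
  define B' where "B' = (\<lambda>(i, k, q :: 'b \<times> 'b). t (snd q) (c i k))"
  have finJ: "finite J" unfolding J_def using fin finite_supp_sep_elem by (intro finite_SigmaI) auto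
  have reindex: "(\<Sum>x\<in>J. W x * \<gamma> (A x) (B' x)) =
      (\<Sum>i\<in>I. wt i * (\<Sum>k<N i. \<mu> i k * twist \<gamma> (sep_elem (y i k)) (a i) (c i k)))" for \<gamma>
    using sum_Sigma_sep_elem[OF fin, where N=N and y=y and wt=wt and \<mu>=\<mu> and \<gamma>=\<gamma>
        and u="\<lambda>i k. a i" and v="\<lambda>i k. c i k"]
    unfolding J_def W_def A_def B'_def by (simp add: split_beta)
  have "(\<Sum>x\<in>J. W x * \<gamma> (A x) (B' x * c')) = 0" if "bil \<gamma>" for \<gamma> c'
  proof -
    have "(\<Sum>x\<in>J. W x * \<gamma> (A x) (B' x * c')) =
        (\<Sum>i\<in>I. wt i * (\<Sum>k<N i. \<mu> i k * twist \<gamma> (sep_elem (y i k)) (a i) (c i k * c')))"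
      using reindex[of "\<lambda>u v. \<gamma> u (v * c')"] by (simp add: twist_mult_snd)
    also have "\<dots> = (\<Sum>i\<in>I. wt i * sep_form \<gamma> (a i) (b i * c'))"
    proof -
      have "b i * c' = (\<Sum>k<N i. scA (\<mu> i k) (t (y i k) (c i k * c')))" for i
        by (subst dec) (simp add: sum_distrib_right scA_mult(1) t_mult)
      then show ?thesis by (simp add: sep_form_t_decomposition[OF that])
    qed
    also have "\<dots> = 0" using H bal_sep_form[OF that] by blast
    finally show ?thesis .
  qed
  moreover have b: "bil \<beta>" using bt unfolding bal_def by blast
  ultimately have "(\<Sum>x\<in>J. W x * \<beta> (A x) (B' x)) = 0"
    using bil_forms_nondeg_snd[OF finJ] by blast
  moreover have "(\<Sum>x\<in>J. W x * \<beta> (A x) (B' x)) = (\<Sum>i\<in>I. wt i * \<beta> (a i) (b i))"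
    unfolding reindex twist_sep_elem_bal_right[OF bt] dec
    by (simp add: bil_sum_right[OF b])
  ultimately show ?thesis by simp
qed

end

subsection \<open>Firm base algebra and locally projective modules\<close>

definition right_hom :: "('b \<Rightarrow> 'a) \<Rightarrow> bool" where
  "right_hom m \<longleftrightarrow> clin scB scA m \<and> (\<forall>x y. m (y * x) = t x (m y))"

definition left_hom :: "('b \<Rightarrow> 'a) \<Rightarrow> bool" where
  "left_hom m \<longleftrightarrow> clin scB scA m \<and> (\<forall>x y. m (x * y) = s x (m y))"

definition firm_split :: "'b \<Rightarrow> ('b \<times> 'b \<Rightarrow> complex)" where
  "firm_split y = (SOME f. fsupp f \<and> fsum scB f (\<lambda>p. fst p * snd p) = y)"

lemma firm_split:
  assumes "firm scB"
  shows "fsupp (firm_split y)" "fsum scB (firm_split y) (\<lambda>p. fst p * snd p) = y"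
proof -
  have "\<exists>f. fsupp f \<and> fsum scB f (\<lambda>p. fst p * snd p) = y" using assms unfolding firm_def by blast
  then have "fsupp (firm_split y) \<and> fsum scB (firm_split y) (\<lambda>p. fst p * snd p) = y"
    unfolding firm_split_def by (rule someI_ex)
  then show "fsupp (firm_split y)" "fsum scB (firm_split y) (\<lambda>p. fst p * snd p) = y" by auto
qed

text \<open>Firmness makes the functional on \<open>B \<otimes>\<^sub>B B \<cong> B\<close> induced by
  \<open>y\<^sub>1 \<otimes> y\<^sub>2 \<mapsto> \<beta> (m' y\<^sub>2) (m y\<^sub>1)\<close> well defined.\<close>

definition firm_eval :: "('a \<Rightarrow> 'a \<Rightarrow> complex) \<Rightarrow> ('b \<Rightarrow> 'a) \<Rightarrow> ('b \<Rightarrow> 'a) \<Rightarrow> 'b \<Rightarrow> complex" where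
  "firm_eval \<beta> m m' y = feval (\<lambda>p. \<beta> (m' (snd p)) (m (fst p))) (firm_split y)"

lemma firm_eval_kills_relations:
  assumes "bal \<beta>" "right_hom m" "left_hom m'"
  shows "\<forall>r\<in>bil_rel scB scB \<union> {\<lambda>q. delta (x * y, z) q - delta (x, y * z) q | x y z. True}.
           fsupp r \<and> feval (\<lambda>p. \<beta> (m' (snd p)) (m (fst p))) r = 0"
proof -
  have "\<beta> (m' z) (m (x * y)) = \<beta> (m' (y * z)) (m x)" for x y z
    using assms unfolding bal_def right_hom_def left_hom_def by simp
  then show ?thesis
    using assms unfolding bil_rel_def bal_def bil_iff right_hom_def left_hom_def clin_def
    by (auto simp: fsupp_delta_diff3 fsupp_delta_diff fsupp_delta_diff1
        feval_delta_diff3 feval_delta_diff feval_delta_diff1)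
qed

lemma firm_eval_eq:
  assumes fm: "firm scB" and "bal \<beta>" "right_hom m" "left_hom m'"
    and f: "fsupp f" and y: "fsum scB f (\<lambda>p. fst p * snd p) = y"
  shows "feval (\<lambda>p. \<beta> (m' (snd p)) (m (fst p))) f = firm_eval \<beta> m m' y"
proof -
  let ?R = "bil_rel scB scB \<union> {\<lambda>q. delta (x * y, z) q - delta (x, y * z) q | x y z. True}"
  have "\<forall>f g. fsupp f \<and> fsupp g \<and> fsum scB f (\<lambda>p. fst p * snd p) = fsum scB g (\<lambda>p. fst p * snd p)
      \<longrightarrow> (\<lambda>q. f q - g q) \<in> fspan ?R"
    using fm unfolding firm_def by (rule conjunct2)
  moreover have "fsum scB f (\<lambda>p. fst p * snd p) = fsum scB (firm_split y) (\<lambda>p. fst p * snd p)"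
    using y firm_split(2)[OF fm] by simp
  ultimately have "(\<lambda>q. f q - firm_split y q) \<in> fspan ?R"
    using f firm_split(1)[OF fm] by blast
  then have "feval (\<lambda>p. \<beta> (m' (snd p)) (m (fst p))) (\<lambda>q. f q - firm_split y q) = 0"
    by (rule feval_fspan[OF firm_eval_kills_relations[OF assms(2-4)]])
  then show ?thesis
    unfolding firm_eval_def feval_diff[OF f firm_split(1)[OF fm]] by simp
qed

lemma firm_eval_sum:
  assumes fm: "firm scB" and "bal \<beta>" "right_hom m" "left_hom m'" and fin: "finite K"
  shows "firm_eval \<beta> m m' (\<Sum>k\<in>K. scB (\<mu> k) (y k)) = (\<Sum>k\<in>K. \<mu> k * firm_eval \<beta> m m' (y k))"
proof -
  define f where "f = (\<lambda>q. \<Sum>k\<in>K. \<mu> k * firm_split (y k) q)"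
  have sp: "\<forall>k\<in>K. fsupp (firm_split (y k))" using firm_split(1)[OF fm] by blast
  have "fsum scB f (\<lambda>p. fst p * snd p) = (\<Sum>k\<in>K. scB (\<mu> k) (y k))"
    unfolding f_def complex_space.fsum_lincomb[OF spaceB fin sp] firm_split(2)[OF fm] ..
  then have "firm_eval \<beta> m m' (\<Sum>k\<in>K. scB (\<mu> k) (y k)) = feval (\<lambda>p. \<beta> (m' (snd p)) (m (fst p))) f"
    using firm_eval_eq[OF assms(1-4) fsupp_lincomb[OF fin sp]] unfolding f_def by simp
  also have "\<dots> = (\<Sum>k\<in>K. \<mu> k * firm_eval \<beta> m m' (y k))"
    unfolding f_def feval_lincomb[OF fin sp] firm_eval_def ..
  finally show ?thesis .
qed

lemma firm_eval_zero:
  assumes "firm scB" "bal \<beta>" "right_hom m" "left_hom m'"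
  shows "firm_eval \<beta> m m' 0 = 0"
  using firm_eval_sum[OF assms, of "{}"] by simp

lemma firm_eval_mult:
  assumes fm: "firm scB" and bal: "bal \<beta>" and m: "right_hom m" and m': "left_hom m'"
  shows "firm_eval \<beta> m m' (y * x) = \<beta> (m' x) (m y)"
proof -
  have b: "bil \<beta>" using bal unfolding bal_def by blast
  define f where "f = firm_split x"
  have f: "fsupp f" "fsum scB f (\<lambda>p. fst p * snd p) = x" using firm_split[OF fm] f_def by auto
  let ?S = "{p. f p \<noteq> 0}"
  define g where "g = fmap (\<lambda>q. (y * fst q, snd q)) f"
  have "fsum scB g (\<lambda>p. fst p * snd p) = (\<Sum>q\<in>?S. scB (f q) (y * fst q * snd q))"
    unfolding g_def by (simp add: complex_space.fsum_fmap[OF spaceB f(1)])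
  also have "\<dots> = y * (\<Sum>q\<in>?S. scB (f q) (fst q * snd q))"
    by (simp add: sum_distrib_left scB_mult(2) mult.assoc)
  also have "\<dots> = y * x" using f(2) unfolding fsum_def by simp
  finally have "firm_eval \<beta> m m' (y * x) = feval (\<lambda>p. \<beta> (m' (snd p)) (m (fst p))) g"
    using firm_eval_eq[OF fm bal m m' fsupp_fmap[OF f(1)]] unfolding g_def by simp
  also have "\<dots> = (\<Sum>q\<in>?S. f q * \<beta> (m' (snd q)) (m (y * fst q)))"
    unfolding g_def by (simp add: feval_fmap[OF f(1)])
  also have "\<dots> = (\<Sum>q\<in>?S. f q * \<beta> (m' (fst q * snd q)) (m y))"
    using bal m m' unfolding bal_def right_hom_def left_hom_def by simp
  also have "\<dots> = \<beta> (\<Sum>q\<in>?S. scA (f q) (m' (fst q * snd q))) (m y)"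
    by (simp add: bil_sum_left[OF b])
  also have "\<dots> = \<beta> (m' x) (m y)"
    using f(2) clin_sum[OF spaceB spaceA, of m' f "\<lambda>q. fst q * snd q" ?S] m'
    unfolding fsum_def left_hom_def by simp
  finally show ?thesis .
qed

lemma firm_eval_sum_clin:
  assumes "firm scB" "bal \<beta>" "right_hom m" "left_hom m'" and u: "clin scA scB u" and "finite I"
  shows "firm_eval \<beta> m m' (u (\<Sum>p\<in>I. scA (wt p) (v p))) = (\<Sum>p\<in>I. wt p * firm_eval \<beta> m m' (u (v p)))"
  by (simp only: clin_sum[OF spaceA spaceB u] firm_eval_sum[OF assms(1-4,6)])

lemma loc_proj_right_basis:
  assumes "loc_proj_right scA scB t" "finite F"
  obtains n :: nat and u m where "\<forall>i<n. clin scA scB (u i) \<and> (\<forall>x a. u i (t x a) = u i a * x) \<and> right_hom (m i)"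
    "\<forall>a\<in>F. (\<Sum>i<n. m i (u i a)) = a"
proof -
  obtain n :: nat and u m where basis: "\<forall>i<n. clin scA scB (u i) \<and> (\<forall>x a. u i (t x a) = u i a * x) \<and>
        clin scB scA (m i) \<and> (\<forall>x y. m i (y * x) = t x (m i y))"
    and "\<forall>a\<in>F. (\<Sum>i<n. m i (u i a)) = a"
    using assms(1)[unfolded loc_proj_right_def, rule_format, OF assms(2)] by blast
  then show ?thesis
    by (intro that[of n u m]) (use basis in \<open>simp_all add: right_hom_def\<close>)
qed

lemma loc_proj_left_basis:
  assumes "loc_proj_left scA scB s" "finite F"
  obtains n :: nat and u m where "\<forall>i<n. clin scA scB (u i) \<and> (\<forall>x a. u i (s x a) = x * u i a) \<and> left_hom (m i)"
    "\<forall>a\<in>F. (\<Sum>i<n. m i (u i a)) = a"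
proof -
  obtain n :: nat and u m where basis: "\<forall>i<n. clin scA scB (u i) \<and> (\<forall>x a. u i (s x a) = x * u i a) \<and>
        clin scB scA (m i) \<and> (\<forall>x y. m i (x * y) = s x (m i y))"
    and "\<forall>a\<in>F. (\<Sum>i<n. m i (u i a)) = a"
    using assms(1)[unfolded loc_proj_left_def, rule_format, OF assms(2)] by blast
  then show ?thesis
    by (intro that[of n u m]) (use basis in \<open>simp_all add: left_hom_def\<close>)
qed

lemma bal_right_coordinate:
  assumes u: "clin scA scB u" "\<forall>x a. u (t x a) = u a * x" and f: "lin f"
  shows "bal (\<lambda>a b. f (s (u b) a))"
proof -
  have "f (a + b) = f a + f b" "f (scA c a) = c * f a"
    and "u (a + b) = u a + u b" "u (scA c a) = scB c (u a)" for a b c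
    using f u(1) unfolding lin_def clin_def by blast+
  then show ?thesis
    unfolding bal_def bil_iff by (simp add: s_add s_scale s_add_B s_scale_B s_times u(2))
qed

lemma bal_left_coordinate:
  assumes u: "clin scA scB u" "\<forall>x a. u (s x a) = x * u a" and f: "lin f"
  shows "bal (\<lambda>a b. f (t (u a) b))"
proof -
  have "f (a + b) = f a + f b" "f (scA c a) = c * f a"
    and "u (a + b) = u a + u b" "u (scA c a) = scB c (u a)" for a b c
    using f u(1) unfolding lin_def clin_def by blast+
  then show ?thesis
    unfolding bal_def bil_iff by (simp add: t_add t_scale t_add_B t_scale_B t_times u(2))
qed

lemma right_coordinate_coefficient_vanishes:
  assumes H: "\<forall>\<beta> c. bal \<beta> \<longrightarrow> (\<Sum>i\<in>I. wt i * \<beta> (a i * c) (b i)) = 0"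
    and u: "clin scA scB u" "\<forall>x a. u (t x a) = u a * x"
  shows "(\<Sum>i\<in>I. scA (wt i) (s (u (b i)) (a i))) = 0"
proof (rule zero_if_lin_right_mult_vanish)
  fix f c assume f: "lin f"
  have "(\<Sum>i\<in>I. scA (wt i) (s (u (b i)) (a i))) * c = (\<Sum>i\<in>I. scA (wt i) (s (u (b i)) (a i * c)))"
    unfolding sum_distrib_right by (simp add: scA_mult(1) s_mult)
  then have "f ((\<Sum>i\<in>I. scA (wt i) (s (u (b i)) (a i))) * c) = (\<Sum>i\<in>I. wt i * f (s (u (b i)) (a i * c)))"
    by (simp add: lin_sum[OF f])
  also have "\<dots> = 0" using H[rule_format, OF bal_right_coordinate[OF u f]] by simp
  finally show "f ((\<Sum>i\<in>I. scA (wt i) (s (u (b i)) (a i))) * c) = 0" .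
qed

lemma left_coordinate_coefficient_vanishes:
  assumes H: "\<forall>\<beta> c. bal \<beta> \<longrightarrow> (\<Sum>i\<in>I. wt i * \<beta> (a i) (b i * c)) = 0"
    and u: "clin scA scB u" "\<forall>x a. u (s x a) = x * u a"
  shows "(\<Sum>i\<in>I. scA (wt i) (t (u (a i)) (b i))) = 0"
proof (rule zero_if_lin_right_mult_vanish)
  fix f c assume f: "lin f"
  have "(\<Sum>i\<in>I. scA (wt i) (t (u (a i)) (b i))) * c = (\<Sum>i\<in>I. scA (wt i) (t (u (a i)) (b i * c)))"
    unfolding sum_distrib_right by (simp add: scA_mult(1) t_mult)
  then have "f ((\<Sum>i\<in>I. scA (wt i) (t (u (a i)) (b i))) * c) = (\<Sum>i\<in>I. wt i * f (t (u (a i)) (b i * c)))"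
    by (simp add: lin_sum[OF f])
  also have "\<dots> = 0" using H[rule_format, OF bal_left_coordinate[OF u f]] by simp
  finally show "f ((\<Sum>i\<in>I. scA (wt i) (t (u (a i)) (b i))) * c) = 0" .
qed

lemma firm_eval_expand_fst:
  assumes fm: "firm scB" and bal: "bal \<beta>" and m: "right_hom m"
    and basis: "\<forall>j<n. clin scA scB (u j) \<and> (\<forall>y a. u j (s y a) = y * u j a) \<and> left_hom (m' j)"
    and x: "(\<Sum>j<n. m' j (u j x)) = x"
  shows "\<beta> x (m y) = (\<Sum>j<n. firm_eval \<beta> m (m' j) (u j (s y x)))"
proof -
  have "(\<Sum>j<n. firm_eval \<beta> m (m' j) (u j (s y x))) = (\<Sum>j<n. \<beta> (m' j (u j x)) (m y))"
    using firm_eval_mult[OF fm bal m] basis by simp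
  also have "\<dots> = \<beta> (\<Sum>j<n. m' j (u j x)) (m y)"
    using bal unfolding bal_def by (simp add: bil_sum_left_plain)
  also have "\<dots> = \<beta> x (m y)" using x by simp
  finally show ?thesis by simp
qed

lemma firm_eval_expand_snd:
  assumes fm: "firm scB" and bal: "bal \<beta>" and m': "left_hom m'"
    and basis: "\<forall>i<n. clin scA scB (u i) \<and> (\<forall>y a. u i (t y a) = u i a * y) \<and> right_hom (m i)"
    and x: "(\<Sum>i<n. m i (u i x)) = x"
  shows "\<beta> (m' y) x = (\<Sum>i<n. firm_eval \<beta> (m i) m' (u i (t y x)))"
proof -
  have "(\<Sum>i<n. firm_eval \<beta> (m i) m' (u i (t y x))) = (\<Sum>i<n. \<beta> (m' y) (m i (u i x)))"
    using firm_eval_mult[OF fm bal _ m'] basis by simp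
  also have "\<dots> = \<beta> (m' y) (\<Sum>i<n. m i (u i x))"
    using bal unfolding bal_def by (simp add: bil_sum_right_plain)
  also have "\<dots> = \<beta> (m' y) x" using x by simp
  finally show ?thesis by simp
qed

lemma loc_proj_nondeg_fst:
  assumes fm: "firm scB" and lpl: "loc_proj_left scA scB s" and lpr: "loc_proj_right scA scB t"
    and fin: "finite I"
    and H: "\<forall>\<beta> c. bal \<beta> \<longrightarrow> (\<Sum>i\<in>I. wt i * \<beta> (a i * c) (b i)) = 0" and bal: "bal \<beta>"
  shows "(\<Sum>i\<in>I. wt i * \<beta> (a i) (b i)) = 0"
proof -
  obtain n :: nat and u m
    where um: "\<forall>k<n. clin scA scB (u k) \<and> (\<forall>x a. u k (t x a) = u k a * x) \<and> right_hom (m k)"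
      and rb: "\<forall>x\<in>b ` I. (\<Sum>k<n. m k (u k x)) = x"
    using loc_proj_right_basis[OF lpr finite_imageI[OF fin]] by blast
  obtain n' :: nat and u' m'
    where um': "\<forall>j<n'. clin scA scB (u' j) \<and> (\<forall>x a. u' j (s x a) = x * u' j a) \<and> left_hom (m' j)"
      and ra: "\<forall>x\<in>a ` I. (\<Sum>j<n'. m' j (u' j x)) = x"
    using loc_proj_left_basis[OF lpl finite_imageI[OF fin]] by blast
  define \<alpha> where "\<alpha> k = (\<Sum>p\<in>I. scA (wt p) (s (u k (b p)) (a p)))" for k
  have \<alpha>: "\<alpha> k = 0" if "k < n" for k
    unfolding \<alpha>_def using right_coordinate_coefficient_vanishes[OF H] um that by blast
  have b: "bil \<beta>" using bal unfolding bal_def by blast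
  have "(\<Sum>p\<in>I. wt p * \<beta> (a p) (b p)) = (\<Sum>p\<in>I. wt p * \<beta> (a p) (\<Sum>k<n. m k (u k (b p))))"
    using rb by simp
  also have "\<dots> = (\<Sum>p\<in>I. \<Sum>k<n. \<Sum>j<n'. wt p * firm_eval \<beta> (m k) (m' j) (u' j (s (u k (b p)) (a p))))"
    using firm_eval_expand_fst[OF fm bal _ um'] um ra
    by (simp add: bil_sum_right_plain[OF b] sum_distrib_left)
  also have "\<dots> = (\<Sum>k<n. \<Sum>p\<in>I. \<Sum>j<n'. wt p * firm_eval \<beta> (m k) (m' j) (u' j (s (u k (b p)) (a p))))"
    by (rule sum.swap)
  also have "\<dots> = (\<Sum>k<n. \<Sum>j<n'. \<Sum>p\<in>I. wt p * firm_eval \<beta> (m k) (m' j) (u' j (s (u k (b p)) (a p))))"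
    by (rule sum.cong[OF refl], rule sum.swap)
  also have "\<dots> = (\<Sum>k<n. \<Sum>j<n'. firm_eval \<beta> (m k) (m' j) (u' j (\<alpha> k)))"
    unfolding \<alpha>_def
    by (intro sum.cong refl firm_eval_sum_clin[OF fm bal _ _ _ fin, symmetric]) (use um um' in auto)
  also have "\<dots> = 0"
    using \<alpha> um um' by (simp add: clin_zero[OF spaceA spaceB] firm_eval_zero[OF fm bal])
  finally show ?thesis .
qed

lemma loc_proj_nondeg_snd:
  assumes fm: "firm scB" and lpl: "loc_proj_left scA scB s" and lpr: "loc_proj_right scA scB t"
    and fin: "finite I"
    and H: "\<forall>\<beta> c. bal \<beta> \<longrightarrow> (\<Sum>i\<in>I. wt i * \<beta> (a i) (b i * c)) = 0" and bal: "bal \<beta>"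
  shows "(\<Sum>i\<in>I. wt i * \<beta> (a i) (b i)) = 0"
proof -
  obtain n :: nat and u m
    where um: "\<forall>k<n. clin scA scB (u k) \<and> (\<forall>x a. u k (t x a) = u k a * x) \<and> right_hom (m k)"
      and rb: "\<forall>x\<in>b ` I. (\<Sum>k<n. m k (u k x)) = x"
    using loc_proj_right_basis[OF lpr finite_imageI[OF fin]] by blast
  obtain n' :: nat and u' m'
    where um': "\<forall>j<n'. clin scA scB (u' j) \<and> (\<forall>x a. u' j (s x a) = x * u' j a) \<and> left_hom (m' j)"
      and ra: "\<forall>x\<in>a ` I. (\<Sum>j<n'. m' j (u' j x)) = x"
    using loc_proj_left_basis[OF lpl finite_imageI[OF fin]] by blast
  define \<alpha> where "\<alpha> j = (\<Sum>p\<in>I. scA (wt p) (t (u' j (a p)) (b p)))" for j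
  have \<alpha>: "\<alpha> j = 0" if "j < n'" for j
    unfolding \<alpha>_def using left_coordinate_coefficient_vanishes[OF H] um' that by blast
  have b: "bil \<beta>" using bal unfolding bal_def by blast
  have "(\<Sum>p\<in>I. wt p * \<beta> (a p) (b p)) = (\<Sum>p\<in>I. wt p * \<beta> (\<Sum>j<n'. m' j (u' j (a p))) (b p))"
    using ra by simp
  also have "\<dots> = (\<Sum>p\<in>I. \<Sum>j<n'. \<Sum>k<n. wt p * firm_eval \<beta> (m k) (m' j) (u k (t (u' j (a p)) (b p))))"
    using firm_eval_expand_snd[OF fm bal _ um] um' rb
    by (simp add: bil_sum_left_plain[OF b] sum_distrib_left)
  also have "\<dots> = (\<Sum>j<n'. \<Sum>p\<in>I. \<Sum>k<n. wt p * firm_eval \<beta> (m k) (m' j) (u k (t (u' j (a p)) (b p))))"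
    by (rule sum.swap)
  also have "\<dots> = (\<Sum>j<n'. \<Sum>k<n. \<Sum>p\<in>I. wt p * firm_eval \<beta> (m k) (m' j) (u k (t (u' j (a p)) (b p))))"
    by (rule sum.cong[OF refl], rule sum.swap)
  also have "\<dots> = (\<Sum>j<n'. \<Sum>k<n. firm_eval \<beta> (m k) (m' j) (u k (\<alpha> j)))"
    unfolding \<alpha>_def
    by (intro sum.cong refl firm_eval_sum_clin[OF fm bal _ _ _ fin, symmetric]) (use um um' in auto)
  also have "\<dots> = 0"
    using \<alpha> um um' by (simp add: clin_zero[OF spaceA spaceB] firm_eval_zero[OF fm bal])
  finally show ?thesis .
qed

lemma balanced_forms_nondeg:
  assumes "(\<forall>F::'a set. finite F \<longrightarrow> (\<exists>e. \<forall>a\<in>F. a * e = a))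
       \<or> (\<exists>E. left_sep_mult scB E)
       \<or> (firm scB \<and> loc_proj_left scA scB s \<and> loc_proj_right scA scB t)"
  shows "balanced_forms_nondeg_fst \<and> balanced_forms_nondeg_snd"
  using assms
proof (elim disjE conjE exE)
  assume lu: "\<forall>F::'a set. finite F \<longrightarrow> (\<exists>e. \<forall>a\<in>F. a * e = a)"
  show ?thesis
  proof
    show balanced_forms_nondeg_fst
      by (rule balanced_forms_nondeg_fstI, rule local_units_nondeg_fst[OF lu])
    show balanced_forms_nondeg_snd
      by (rule balanced_forms_nondeg_sndI, rule local_units_nondeg_snd[OF lu])
  qed
next
  fix E assume sep: "left_sep_mult scB E"
  show ?thesis
  proof
    show balanced_forms_nondeg_fst
      by (rule balanced_forms_nondeg_fstI, rule sep_mult_nondeg_fst[OF sep])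
    show balanced_forms_nondeg_snd
      by (rule balanced_forms_nondeg_sndI, rule sep_mult_nondeg_snd[OF sep])
  qed
next
  assume proj: "firm scB" "loc_proj_left scA scB s" "loc_proj_right scA scB t"
  show ?thesis
  proof
    show balanced_forms_nondeg_fst
      by (rule balanced_forms_nondeg_fstI, rule loc_proj_nondeg_fst[OF proj])
    show balanced_forms_nondeg_snd
      by (rule balanced_forms_nondeg_sndI, rule loc_proj_nondeg_snd[OF proj])
  qed
qed

end

theorem lemma2p1:
  fixes scA :: "complex \<Rightarrow> 'a::ring \<Rightarrow> 'a"
    and scB :: "complex \<Rightarrow> 'b::ring \<Rightarrow> 'b"
    and s t :: "'b \<Rightarrow> 'a \<Rightarrow> 'a"
  assumes algA: "calg scA" and algB: "calg scB"
    and A_idem: "\<forall>a. a \<in> cspan scA {b * c | b c. True}"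
    and A_nondeg: "\<forall>a::'a. (\<forall>b. a * b = 0) \<longrightarrow> a = 0"
    and s_M: "\<forall>x. in_MA scA (s x)"
    and s_hom: "\<forall>x y. s (x + y) = (\<lambda>a. s x a + s y a)"
               "\<forall>c x. s (scB c x) = (\<lambda>a. scA c (s x a))"
               "\<forall>x y. s (x * y) = s x \<circ> s y"
    and t_M: "\<forall>x. in_MA scA (t x)"
    and t_antihom: "\<forall>x y. t (x + y) = (\<lambda>a. t x a + t y a)"
               "\<forall>c x. t (scB c x) = (\<lambda>a. scA c (t x a))"
               "\<forall>x y. t (x * y) = t y \<circ> t x"
    and commute: "\<forall>x y. s x \<circ> t y = t y \<circ> s x"
    and s_faithful: "inj s" and t_faithful: "inj t"
    and s_idem: "\<forall>a. a \<in> cspan scA {s x b | x b. True}"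
    and t_idem: "\<forall>a. a \<in> cspan scA {t x b | x b. True}"
    and cases:
      "(\<forall>F::'a set. finite F \<longrightarrow> (\<exists>e. \<forall>a\<in>F. a * e = a))
       \<or> (\<exists>E. left_sep_mult scB E)
       \<or> (firm scB \<and> loc_proj_left scA scB s \<and> loc_proj_right scA scB t)"
  shows "(\<forall>w. fsupp w \<longrightarrow>
            (\<forall>c. fmap (\<lambda>p. (fst p * c, snd p)) w \<in> balA_ker scA s t) \<longrightarrow>
            w \<in> balA_ker scA s t)
       \<and> (\<forall>w. fsupp w \<longrightarrow>
            (\<forall>c. fmap (\<lambda>p. (fst p, snd p * c)) w \<in> balA_ker scA s t) \<longrightarrow>
            w \<in> balA_ker scA s t)"
proof -
  interpret balanced_tensor_setting scA scB s t
    unfolding balanced_tensor_setting_def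
    using algA algB A_nondeg s_M s_hom t_M t_antihom s_idem t_idem by blast
  have "balanced_forms_nondeg_fst \<and> balanced_forms_nondeg_snd"
    using cases by (rule balanced_forms_nondeg)
  then show ?thesis using ker_nondeg_fst ker_nondeg_snd by blast
qed

end
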